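(* Let $\mathcal{G}=(\mathcal{V},\mathcal{E})$ be a finite graph and let $x=(x_v)_{v\in\mathcal{V}}\in[0,1]^{\mathcal{V}}$. Then the following are equivalent: (1) $f\big((x_v/(1-x_v))_{v\in\mathcal{V}}\big)<\infty$ (in particular each $x_v<1$); (2) $\tilde f(x)<\infty$; (3) $\mathfrak{K}_{\mathcal{G}}(y)>0$ for each $y\in\prod_{v\in\mathcal{V}}\{0,x_v\}$; (4) $\mathfrak{K}_{\mathcal{G}}(y)>0$ for each $y\in\prod_{v\in\mathcal{V}}[0,x_v]$; (5) $\mathfrak{K}_{\mathcal{G}}(\alpha x)>0$ for all $\alpha\in[0,1]$.
   Context: Graphs are finite, simple, undirected; $v\sim v'$ denotes adjacency; a clique is a set of pairwise adjacent vertices (the empty set is a clique). $\mathfrak{K}_{\mathcal{G}}(x)=\sum_{\mathcal{K}\subseteq\mathcal{V}\text{ clique}}(-1)^{|\mathcal{K}|}\prod_{v\in\mathcal{K}}x_v$, the empty clique contributing $1$. A word is a finite string $w=w_1\cdots w_\ell$ of vertices (the empty word allowed). It is $\mathcal{G}$-reduced if whenever $i<j$ and $w_i=w_j$ there is $k$ with $i<k<j$, $w_k\ne w_i$, $w_k\not\sim w_i$. Two words are equivalent if one is obtained from the other by finitely many swaps of consecutive letters $w_iw_{i+1}$ with $w_i\sim w_{i+1}$. Let $\mathcal{W}_\ell$ be a set of representatives of equivalence classes of $\mathcal{G}$-reduced words of length $\ell$ and $\overline{\mathcal{W}}$ a set of representatives of equivalence classes of all words. Define the power series $f(X)=\sum_{\ell\ge0}\sum_{w\in\mathcal{W}_\ell}X_{w_1}\cdots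 X_{w_\ell}$ and $\tilde f(X)=\sum_{w\in\overline{\mathcal{W}}}X_{w_1}\cdots X_{w_\ell}$; for nonnegative real arguments these are evaluated in $[0,\infty]$ (and in (1) the value is $+\infty$ if some $x_v=1$). *)

theory Defs
  imports "HOL-Analysis.Analysis" "HOL-Library.Extended_Nonnegative_Real"
begin

definition simple_graph :: "'v set \<Rightarrow> ('v \<Rightarrow> 'v \<Rightarrow> bool) \<Rightarrow> bool" where
  "simple_graph V E \<longleftrightarrow> finite V \<and> (\<forall>a b. E a b \<longrightarrow> E b a) \<and> (\<forall>a. \<not> E a a)
     \<and> (\<forall>a b. E a b \<longrightarrow> a \<in> V \<and> b \<in> V)"

definition is_clique :: "('v \<Rightarrow> 'v \<Rightarrow> bool) \<Rightarrow> 'v set \<Rightarrow> bool" where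
  "is_clique E K \<longleftrightarrow> (\<forall>a\<in>K. \<forall>b\<in>K. a \<noteq> b \<longrightarrow> E a b)"

definition clique_poly :: "'v set \<Rightarrow> ('v \<Rightarrow> 'v \<Rightarrow> bool) \<Rightarrow> ('v \<Rightarrow> real) \<Rightarrow> real" where
  "clique_poly V E x = (\<Sum>K\<in>{K. K \<subseteq> V \<and> is_clique E K}. (-1) ^ card K * (\<Prod>v\<in>K. x v))"

definition words :: "'v set \<Rightarrow> 'v list set" where
  "words V = {w. set w \<subseteq> V}"

definition reduced_word :: "('v \<Rightarrow> 'v \<Rightarrow> bool) \<Rightarrow> 'v list \<Rightarrow> bool" where
  "reduced_word E w \<longleftrightarrow> (\<forall>i j. i < j \<and> j < length w \<and> w ! i = w ! j \<longrightarrow>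
      (\<exists>k. i < k \<and> k < j \<and> w ! k \<noteq> w ! i \<and> \<not> E (w ! k) (w ! i)))"

definition swap_step :: "('v \<Rightarrow> 'v \<Rightarrow> bool) \<Rightarrow> 'v list \<Rightarrow> 'v list \<Rightarrow> bool" where
  "swap_step E w w' \<longleftrightarrow> (\<exists>u a b v. w = u @ [a, b] @ v \<and> w' = u @ [b, a] @ v \<and> E a b)"

definition word_equiv :: "('v \<Rightarrow> 'v \<Rightarrow> bool) \<Rightarrow> ('v list \<times> 'v list) set" where
  "word_equiv E = {(w, w'). (\<lambda>p q. swap_step E p q \<or> swap_step E q p)\<^sup>*\<^sup>* w w'}"

definition monomial :: "('v \<Rightarrow> ennreal) \<Rightarrow> 'v list \<Rightarrow> ennreal" where
  "monomial X w = prod_list (map X w)"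

text \<open>f(X): sum over equivalence classes of G-reduced words, one representative each
  (the monomial does not depend on the representative).\<close>
definition f_series :: "'v set \<Rightarrow> ('v \<Rightarrow> 'v \<Rightarrow> bool) \<Rightarrow> ('v \<Rightarrow> ennreal) \<Rightarrow> ennreal" where
  "f_series V E X = (\<Sum>\<^sub>\<infinity> C \<in> {w \<in> words V. reduced_word E w} // word_equiv E.
       monomial X (SOME w. w \<in> C \<and> reduced_word E w))"

definition ftilde_series :: "'v set \<Rightarrow> ('v \<Rightarrow> 'v \<Rightarrow> bool) \<Rightarrow> ('v \<Rightarrow> ennreal) \<Rightarrow> ennreal" where
  "ftilde_series V E X = (\<Sum>\<^sub>\<infinity> C \<in> words V // word_equiv E. monomial X (SOME w. w \<in> C))"

end

(*
  Words modulo commutation of adjacent letters are the traces of the graph.  The Cartier-Foata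
  identity says that the clique polynomial graded by clique size, K(t) = sum_K (-1)^|K| x^K t^|K|,
  is the inverse of the generating function F(t) = sum_n A_n t^n of traces weighted by x and
  counted by length.  Hence f~(x) = sum_n A_n is finite iff this nonnegative series converges,
  and then K(x) * sum_n A_n = 1 forces K(x) > 0; since A_n is monotone in x this gives
  (2) ==> (4) ==> (3), (5).

  Conversely, deleting a vertex v gives K_V = K_{V-v} - x_v t K_{N(v)}, hence the renewal
  equation F_V = F_{V-v} + x_v t (K_{N(v)} F_{V-v}) F_V.  Its kernel has total mass
  x_v K_{N(v)}(x) / K_{V-v}(x) = 1 - K_V(x) / K_{V-v}(x), which is below 1 when all K_U(x) > 0,
  so induction on V gives (3) ==> (2).  For (5) ==> (3), at the first alpha where some
  K_U(alpha x) vanishes, K_V <= K_U still holds just below alpha, contradicting K_V(alpha x) > 0.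

  Finally, every trace arises uniquely from a reduced trace by replacing each letter of a
  reduced representative by a positive power of itself; summing these geometric series gives
  f~(x) = f(x / (1 - x)), which is (1) <==> (2).
*)

theory Submission
  imports Defs "HOL-Computational_Algebra.Formal_Power_Series"
begin

unbundle no vec_syntax
unbundle fps_syntax

lemma sum_Pow_alternating:
  assumes "finite S"
  shows "(\<Sum>K\<in>Pow S. (-1::'a::comm_ring_1) ^ card K) = (if S = {} then 1 else 0)"
  using prod_diff_conv_sum[OF assms, of "\<lambda>_. 1" "\<lambda>_. 1::'a"] assms
  by (simp add: power_0_left)

lemma prod_list_map_mono:
  fixes f g :: "'a \<Rightarrow> 'b :: linordered_semidom"
  shows "\<forall>x\<in>set xs. 0 \<le> f x \<and> f x \<le> g x \<Longrightarrow> prod_list (map f xs) \<le> prod_list (map g xs)"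
proof (induction xs)
  case (Cons x xs)
  then have "0 \<le> prod_list (map f xs)"
    by (intro prod_list_nonneg) auto
  then show ?case
    using Cons by (auto intro: mult_mono)
qed simp

lemma fps_mult_partial_sum_le:
  fixes P F :: "real fps"
  assumes "\<And>n. 0 \<le> P $ n" "\<And>n. 0 \<le> F $ n"
  shows "(\<Sum>m\<le>M. (P * F) $ m) \<le> (\<Sum>i\<le>M. P $ i) * (\<Sum>j\<le>M. F $ j)"
proof -
  have "(\<Sum>m\<le>M. (P * F) $ m) = (\<Sum>(i, j)\<in>{(i, j). i + j \<le> M}. P $ i * F $ j)"
    by (simp add: sum.triangle_reindex_eq fps_mult_nth atLeast0AtMost)
  also have "\<dots> \<le> (\<Sum>(i, j)\<in>{..M} \<times> {..M}. P $ i * F $ j)"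
    by (rule sum_mono2) (auto intro: mult_nonneg_nonneg assms)
  also have "\<dots> = (\<Sum>i\<le>M. P $ i) * (\<Sum>j\<le>M. F $ j)"
    by (simp add: sum_product sum.cartesian_product)
  finally show ?thesis .
qed

lemma summable_fps_renewal:
  fixes F B P :: "real fps"
  assumes F: "F = B + fps_const c * (fps_X * (P * F))"
    and F0: "\<And>n. 0 \<le> F $ n" and B0: "\<And>n. 0 \<le> B $ n" and P0: "\<And>n. 0 \<le> P $ n" and c0: "0 \<le> c"
    and B: "summable (\<lambda>n. B $ n)" and P: "(\<lambda>n. P $ n) sums p" and cp: "c * p < 1"
  shows "summable (\<lambda>n. F $ n)"
proof (rule bounded_imp_summable)
  fix M
  define S where "S = (\<Sum>n\<le>M. F $ n)"
  have PF0: "0 \<le> (P * F) $ m" for m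
    by (simp add: fps_mult_nth sum_nonneg P0 F0)
  have "(\<Sum>n\<le>M. (fps_X * (P * F)) $ n) \<le> (\<Sum>m\<le>M. (P * F) $ m)"
  proof (cases M)
    case (Suc M')
    have "(\<Sum>n\<le>M. (fps_X * (P * F)) $ n) = (\<Sum>m\<le>M'. (P * F) $ m)"
      unfolding Suc sum.atMost_Suc_shift by simp
    also have "\<dots> \<le> (\<Sum>m\<le>M. (P * F) $ m)"
      unfolding Suc by (simp add: PF0)
    finally show ?thesis .
  qed (use PF0[of 0] in simp)
  also have "\<dots> \<le> (\<Sum>i\<le>M. P $ i) * S"
    unfolding S_def by (rule fps_mult_partial_sum_le[OF P0 F0])
  also have "\<dots> \<le> p * S"
    using sum_le_suminf[OF sums_summable[OF P], of "{..M}"] P0 F0 sums_unique[OF P]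
    by (auto simp: S_def intro!: mult_right_mono sum_nonneg)
  finally have "(\<Sum>n\<le>M. (fps_X * (P * F)) $ n) \<le> p * S" .
  then have "S \<le> suminf (\<lambda>n. B $ n) + c * (p * S)"
    using sum_le_suminf[OF B, of "{..M}"] B0 c0
    by (subst S_def, subst F) (auto simp: sum.distrib simp flip: sum_distrib_left intro!: add_mono mult_left_mono)
  then have "S * (1 - c * p) \<le> suminf (\<lambda>n. B $ n)"
    by (simp add: algebra_simps)
  then show "sum (\<lambda>n. F $ n) {..M} \<le> suminf (\<lambda>n. B $ n) / (1 - c * p)"
    using cp by (simp add: S_def pos_le_divide_eq)
qed (rule F0)

lemma continuous_le_at_left:
  fixes f g :: "real \<Rightarrow> real"
  assumes "continuous_on UNIV f" "continuous_on UNIV g" "b < a" "\<And>t. b < t \<Longrightarrow> t < a \<Longrightarrow> f t \<le> g t"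
  shows "f a \<le> g a"
proof (rule tendsto_le[OF trivial_limit_at_left_real])
  have "(h \<longlongrightarrow> h a) (at_left a)" if "continuous_on UNIV h" for h :: "real \<Rightarrow> real"
  proof (rule tendsto_within_subset)
    show "(h \<longlongrightarrow> h a) (at a)"
      using that by (simp add: continuous_on_eq_continuous_at isCont_def)
  qed simp
  then show "(f \<longlongrightarrow> f a) (at_left a)" "(g \<longlongrightarrow> g a) (at_left a)"
    using assms(1,2) by blast+
  show "eventually (\<lambda>t. f t \<le> g t) (at_left a)"
    using eventually_at_left_real[OF assms(3)] by eventually_elim (use assms(4) in auto)
qed

lemma infsum_cmult_right_ennreal:
  fixes f :: "'a \<Rightarrow> ennreal"
  shows "(\<Sum>\<^sub>\<infinity>x\<in>A. c * f x) = c * infsum f A"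
  by (simp add: nonneg_infsum_complete sum_distrib_left[symmetric] SUP_mult_left_ennreal)

lemma sum_le_infsum_ennreal:
  fixes f :: "'a \<Rightarrow> ennreal"
  assumes "finite F" "F \<subseteq> A"
  shows "sum f F \<le> infsum f A"
proof -
  have "infsum f F \<le> infsum f A"
    by (rule infsum_mono_neutral) (use assms in \<open>auto simp: nonneg_summable_on_complete\<close>)
  then show ?thesis
    using assms(1) by simp
qed

lemma infsum_Sigma_ennreal:
  fixes f :: "'a \<times> 'b \<Rightarrow> ennreal"
  shows "infsum f (Sigma A B) = (\<Sum>\<^sub>\<infinity>x\<in>A. \<Sum>\<^sub>\<infinity>y\<in>B x. f (x, y))"
proof -
  have finite: "infsum f (Sigma G B) = (\<Sum>x\<in>G. \<Sum>\<^sub>\<infinity>y\<in>B x. f (x, y))" if "finite G" for G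
  proof -
    have "(\<Sum>x\<in>G. \<Sum>\<^sub>\<infinity>y\<in>B x. f (x, y)) = (\<Sum>x\<in>G. infsum f (Pair x ` B x))"
      by (simp add: infsum_reindex inj_on_def comp_def)
    also have "\<dots> = infsum f (\<Union>x\<in>G. Pair x ` B x)"
      using that by (intro sum_infsum) (auto simp: nonneg_summable_on_complete)
    also have "(\<Union>x\<in>G. Pair x ` B x) = Sigma G B"
      by auto
    finally show ?thesis
      by (rule sym)
  qed
  show ?thesis
  proof (rule antisym)
    show "infsum f (Sigma A B) \<le> (\<Sum>\<^sub>\<infinity>x\<in>A. \<Sum>\<^sub>\<infinity>y\<in>B x. f (x, y))"
    proof (rule infsum_le_finite_sums, simp add: nonneg_summable_on_complete)
      fix F assume F: "finite F" "F \<subseteq> Sigma A B"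
      have "sum f F \<le> infsum f (Sigma (fst ` F) B)"
        using F by (intro sum_le_infsum_ennreal) force+
      also have "\<dots> = (\<Sum>x\<in>fst ` F. \<Sum>\<^sub>\<infinity>y\<in>B x. f (x, y))"
        using F by (simp add: finite)
      also have "\<dots> \<le> (\<Sum>\<^sub>\<infinity>x\<in>A. \<Sum>\<^sub>\<infinity>y\<in>B x. f (x, y))"
        using F by (intro sum_le_infsum_ennreal) auto
      finally show "sum f F \<le> (\<Sum>\<^sub>\<infinity>x\<in>A. \<Sum>\<^sub>\<infinity>y\<in>B x. f (x, y))" .
    qed
    show "(\<Sum>\<^sub>\<infinity>x\<in>A. \<Sum>\<^sub>\<infinity>y\<in>B x. f (x, y)) \<le> infsum f (Sigma A B)"
    proof (rule infsum_le_finite_sums, simp add: nonneg_summable_on_complete)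
      fix G assume G: "finite G" "G \<subseteq> A"
      then have "(\<Sum>x\<in>G. \<Sum>\<^sub>\<infinity>y\<in>B x. f (x, y)) = infsum f (Sigma G B)"
        by (simp add: finite)
      also have "\<dots> \<le> infsum f (Sigma A B)"
        using G by (intro infsum_mono_neutral) (auto simp: nonneg_summable_on_complete)
      finally show "(\<Sum>x\<in>G. \<Sum>\<^sub>\<infinity>y\<in>B x. f (x, y)) \<le> infsum f (Sigma A B)" .
    qed
  qed
qed

lemma infsum_product_ennreal:
  fixes f :: "'a \<Rightarrow> ennreal" and g :: "'b \<Rightarrow> ennreal"
  shows "(\<Sum>\<^sub>\<infinity>(x, y)\<in>A \<times> B. f x * g y) = infsum f A * infsum g B"
proof -
  have "(\<Sum>\<^sub>\<infinity>(x, y)\<in>A \<times> B. f x * g y) = (\<Sum>\<^sub>\<infinity>x\<in>A. \<Sum>\<^sub>\<infinity>y\<in>B. f x * g y)"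
    using infsum_Sigma_ennreal[of "\<lambda>(x, y). f x * g y" A "\<lambda>_. B"] by (simp only: case_prod_conv)
  also have "\<dots> = (\<Sum>\<^sub>\<infinity>x\<in>A. infsum g B * f x)"
    by (simp only: infsum_cmult_right_ennreal mult.commute)
  also have "\<dots> = infsum g B * infsum f A"
    by (rule infsum_cmult_right_ennreal)
  finally show ?thesis
    by (simp only: mult.commute)
qed

lemma infsum_ennreal_of_real:
  fixes f :: "'a \<Rightarrow> real"
  assumes "f summable_on A" and "\<And>x. x \<in> A \<Longrightarrow> 0 \<le> f x"
  shows "(\<Sum>\<^sub>\<infinity>x\<in>A. ennreal (f x)) = ennreal (infsum f A)"
proof -
  have "(\<Sum>\<^sub>\<infinity>x\<in>A. ennreal (f x)) = (SUP F\<in>{F. finite F \<and> F \<subseteq> A}. \<Sum>x\<in>F. ennreal (f x))"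
    by (rule nonneg_infsum_complete) simp
  also have "\<dots> = (SUP F\<in>{F. finite F \<and> F \<subseteq> A}. ennreal (sum f F))"
    using assms(2) by (intro SUP_cong refl sum_ennreal) auto
  also have "\<dots> = ennreal (infsum f A)"
    by (rule infsum_nonneg_is_SUPREMUM_ennreal[OF assms, symmetric])
  finally show ?thesis .
qed

lemma infsum_ennreal_less_top_iff_summable:
  fixes a :: "nat \<Rightarrow> real"
  assumes a0: "\<And>n. 0 \<le> a n"
  shows "(\<Sum>\<^sub>\<infinity>n. ennreal (a n)) < \<infinity> \<longleftrightarrow> summable a"
proof
  assume finite: "(\<Sum>\<^sub>\<infinity>n. ennreal (a n)) < \<infinity>"
  obtain r where r: "(\<Sum>\<^sub>\<infinity>n. ennreal (a n)) = ennreal r" "0 \<le> r"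
    using finite by (cases "\<Sum>\<^sub>\<infinity>n. ennreal (a n)" rule: ennreal_cases) auto
  have "sum a {..M} \<le> r" for M
  proof -
    have "ennreal (sum a {..M}) = (\<Sum>n\<le>M. ennreal (a n))"
      using a0 by (rule sum_ennreal[symmetric])
    also have "\<dots> \<le> ennreal r"
      unfolding r(1)[symmetric] by (rule sum_le_infsum_ennreal) auto
    finally show ?thesis
      using r(2) by (simp add: ennreal_le_iff)
  qed
  then show "summable a"
    by (rule bounded_imp_summable[OF a0])
next
  assume "summable a"
  then have "(a has_sum suminf a) UNIV"
    using a0 by (intro sums_nonneg_imp_has_sum summable_sums)
  then have "(\<Sum>\<^sub>\<infinity>n. ennreal (a n)) = ennreal (infsum a UNIV)"
    using a0 by (intro infsum_ennreal_of_real has_sum_imp_summable)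
  then show "(\<Sum>\<^sub>\<infinity>n. ennreal (a n)) < \<infinity>"
    by simp
qed

lemma infsum_geometric_ennreal:
  fixes t :: real
  assumes "0 \<le> t" "t < 1"
  shows "(\<Sum>\<^sub>\<infinity>k\<in>{0<..}. ennreal t ^ k) = ennreal (t / (1 - t))"
proof -
  have "((\<lambda>k. t ^ k) has_sum (1 / (1 - t))) UNIV"
    using assms by (intro sums_nonneg_imp_has_sum geometric_sums) auto
  then have geo: "(\<Sum>\<^sub>\<infinity>k. ennreal (t ^ k)) = ennreal (1 / (1 - t))"
    using assms by (simp add: infsum_ennreal_of_real has_sum_imp_summable infsumI)
  have "{0<..} = range Suc"
    using gr0_implies_Suc by auto
  then have "(\<Sum>\<^sub>\<infinity>k\<in>{0<..}. ennreal t ^ k) = (\<Sum>\<^sub>\<infinity>k. ennreal t * ennreal t ^ k)"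
    by (simp add: infsum_reindex comp_def)
  also have "\<dots> = ennreal t * ennreal (1 / (1 - t))"
    using assms by (simp only: infsum_cmult_right_ennreal geo ennreal_power)
  also have "\<dots> = ennreal (t / (1 - t))"
    using assms by (subst ennreal_mult[symmetric]) auto
  finally show ?thesis .
qed

lemma monomial_ennreal:
  "\<forall>v\<in>set w. 0 \<le> y v \<Longrightarrow> monomial (\<lambda>v. ennreal (y v)) w = ennreal (prod_list (map y w))"
proof (induction w)
  case (Cons a w)
  have "0 \<le> prod_list (map y w)"
    using Cons.prems by (intro prod_list_nonneg) auto
  then show ?case
    using Cons by (simp add: monomial_def ennreal_mult)
qed (simp add: monomial_def)

lemma append_eq_append_Cons_insertE:
  assumes "p @ w = q @ b # s"
  obtains q' s' where "p @ a # w = q' @ b # s'" "set q' \<subseteq> insert a (set q)"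
proof -
  obtain us where "p = q @ us \<and> us @ w = b # s \<or> p @ us = q \<and> w = us @ b # s"
    using assms append_eq_append_conv2[of p w q "b # s"] by blast
  then show thesis
  proof (elim disjE conjE)
    assume us: "p = q @ us" "us @ w = b # s"
    show thesis
    proof (cases us)
      case Nil
      then show thesis
        using us that[of "q @ [a]" s] by auto
    next
      case (Cons c t)
      then show thesis
        using us that[of q "t @ a # w"] by auto
    qed
  next
    assume "p @ us = q" "w = us @ b # s"
    then show thesis
      by (intro that[of "p @ a # us" s]) auto
  qed
qed

definition expand :: "('a \<times> nat) list \<Rightarrow> 'a list" where
  "expand bl = concat (map (\<lambda>(a, k). replicate k a) bl)"

definition positive_blocks :: "('a \<times> nat) list \<Rightarrow> bool" where
  "positive_blocks bl \<longleftrightarrow> (\<forall>p\<in>set bl. 0 < snd p)"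

definition blocks :: "'a list \<Rightarrow> ('a \<times> nat) list set" where
  "blocks r = {bl. map fst bl = r \<and> positive_blocks bl}"

definition block_exponents :: "'a \<Rightarrow> ('a \<times> nat) list \<Rightarrow> nat list" where
  "block_exponents a bl = map snd (filter (\<lambda>p. fst p = a) bl)"

lemma expand_simps [simp]:
  "expand [] = []"
  "expand ((a, k) # bl) = replicate k a @ expand bl"
  "expand (bl @ bl') = expand bl @ expand bl'"
  by (simp_all add: expand_def)

lemma positive_blocks_simps [simp]:
  "positive_blocks []"
  "positive_blocks ((a, k) # bl) \<longleftrightarrow> 0 < k \<and> positive_blocks bl"
  "positive_blocks (bl @ bl') \<longleftrightarrow> positive_blocks bl \<and> positive_blocks bl'"
  by (auto simp: positive_blocks_def)

lemma block_exponents_simps [simp]: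
  "block_exponents a [] = []"
  "block_exponents a ((b, k) # bl) = (if b = a then k # block_exponents a bl else block_exponents a bl)"
  "block_exponents a (bl @ bl') = block_exponents a bl @ block_exponents a bl'"
  by (simp_all add: block_exponents_def)

lemma set_expand_subset: "set (expand bl) \<subseteq> fst ` set bl"
  by (induction bl) auto

lemma set_expand: "positive_blocks bl \<Longrightarrow> set (expand bl) = fst ` set bl"
proof (induction bl)
  case (Cons p bl)
  then show ?case
    by (cases p) auto
qed simp

lemma expand_eq_Nil_iff: "positive_blocks bl \<Longrightarrow> expand bl = [] \<longleftrightarrow> bl = []"
  by (cases bl) auto

lemma prod_list_expand: "prod_list (map X (expand bl)) = prod_list (map (\<lambda>(a, k). X a ^ k) bl)"
  by (induction bl) auto

lemma map_fst_eq_append_Cons: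
  assumes "map fst bl = p @ a # q"
  obtains bl1 k bl2 where "bl = bl1 @ (a, k) # bl2" "map fst bl1 = p" "map fst bl2 = q"
proof -
  obtain bl1 bl' where "bl = bl1 @ bl'" "map fst bl1 = p" "map fst bl' = a # q"
    using assms by (auto simp: map_eq_append_conv)
  moreover then obtain z bl2 where "bl' = z # bl2" "fst z = a" "map fst bl2 = q"
    by (auto simp: map_eq_Cons_conv)
  ultimately show thesis
    using that[of bl1 "snd z" bl2] by (cases z) auto
qed

lemma block_exponents_eq_Nil: "a \<notin> fst ` set bl \<Longrightarrow> block_exponents a bl = []"
  by (induction bl) auto

lemma blocks_eqI:
  "map fst bl = map fst bl' \<Longrightarrow> \<forall>a. block_exponents a bl = block_exponents a bl' \<Longrightarrow> bl = bl'"
proof (induction bl arbitrary: bl')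
  case (Cons p bl)
  obtain a k where p: "p = (a, k)"
    by (cases p)
  obtain k' bl2 where bl': "bl' = (a, k') # bl2" and letters: "map fst bl = map fst bl2"
    using Cons.prems(1) p by (cases bl') auto
  have "k' = k" "block_exponents a bl = block_exponents a bl2"
    using Cons.prems(2)[rule_format, of a] p bl' by simp_all
  moreover have "block_exponents b bl = block_exponents b bl2" if "b \<noteq> a" for b
    using Cons.prems(2)[rule_format, of b] p bl' that by simp
  ultimately have "\<forall>b. block_exponents b bl = block_exponents b bl2"
    by metis
  then show ?case
    using Cons.IH[OF letters] p bl' \<open>k' = k\<close> by simp
qed simp

lemma infsum_blocks_ennreal:
  fixes X :: "'a \<Rightarrow> ennreal"
  shows "(\<Sum>\<^sub>\<infinity>bl\<in>blocks r. prod_list (map (\<lambda>(a, k). X a ^ k) bl))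
       = prod_list (map (\<lambda>a. \<Sum>\<^sub>\<infinity>k\<in>{0<..}. X a ^ k) r)"
proof (induction r)
  case Nil
  have "blocks ([] :: 'a list) = {[]}"
    by (auto simp: blocks_def)
  then show ?case
    by simp
next
  case (Cons a r)
  let ?f = "\<lambda>(k, bl). (a, k) # bl"
  have "blocks (a # r) = ?f ` ({0<..} \<times> blocks r)"
    by (auto simp: blocks_def map_eq_Cons_conv positive_blocks_def image_iff)
  moreover have "inj_on ?f ({0<..} \<times> blocks r)"
    by (auto simp: inj_on_def)
  ultimately have "(\<Sum>\<^sub>\<infinity>bl\<in>blocks (a # r). prod_list (map (\<lambda>(a, k). X a ^ k) bl))
      = (\<Sum>\<^sub>\<infinity>(k, bl)\<in>{0<..} \<times> blocks r. X a ^ k * prod_list (map (\<lambda>(a, k). X a ^ k) bl))"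
    by (simp add: infsum_reindex comp_def case_prod_unfold)
  also have "\<dots> = (\<Sum>\<^sub>\<infinity>k\<in>{0<..}. X a ^ k) * prod_list (map (\<lambda>a. \<Sum>\<^sub>\<infinity>k\<in>{0<..}. X a ^ k) r)"
    by (simp only: infsum_product_ennreal Cons.IH)
  finally show ?case
    by simp
qed

section \<open>The clique polynomial\<close>

lemma clique_poly_restrict:
  assumes "finite V" "U \<subseteq> V" "\<forall>v\<in>V - U. y v = 0"
  shows "clique_poly V E y = clique_poly U E y"
  unfolding clique_poly_def
proof (rule sum.mono_neutral_right)
  show "finite {K. K \<subseteq> V \<and> is_clique E K}"
    using assms(1) by simp
  show "{K. K \<subseteq> U \<and> is_clique E K} \<subseteq> {K. K \<subseteq> V \<and> is_clique E K}"
    using assms(2) by auto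
  show "\<forall>K\<in>{K. K \<subseteq> V \<and> is_clique E K} - {K. K \<subseteq> U \<and> is_clique E K}. (-1) ^ card K * prod y K = 0"
  proof
    fix K assume K: "K \<in> {K. K \<subseteq> V \<and> is_clique E K} - {K. K \<subseteq> U \<and> is_clique E K}"
    then obtain v where "v \<in> K" "v \<in> V - U"
      by blast
    moreover have "finite K"
      using K assms(1) finite_subset by blast
    ultimately show "(-1) ^ card K * prod y K = 0"
      using assms(3) by (auto simp: prod_zero_iff)
  qed
qed

lemma clique_poly_cong: "\<forall>v\<in>U. y v = y' v \<Longrightarrow> clique_poly U E y = clique_poly U E y'"
  unfolding clique_poly_def by (intro sum.cong refl arg_cong2[where f = "(*)"] prod.cong) auto

lemma clique_poly_empty: "clique_poly {} E y = 1"
proof -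
  have "{K. K \<subseteq> {} \<and> is_clique E K} = {{}}"
    by (auto simp: is_clique_def)
  then show ?thesis
    unfolding clique_poly_def by simp
qed

lemma clique_poly_zero: "finite V \<Longrightarrow> clique_poly V E (\<lambda>_. 0) = 1"
  using clique_poly_restrict[of V "{}"] by (simp add: clique_poly_empty)

lemma clique_poly_singleton: "clique_poly {v} E y = 1 - y v"
proof -
  have "{K. K \<subseteq> {v} \<and> is_clique E K} = {{}, {v}}"
    by (auto simp: is_clique_def)
  then show ?thesis
    unfolding clique_poly_def by simp
qed

lemma pos_clique_poly_subsets_iff:
  assumes "finite V"
  shows "(\<forall>y. (\<forall>v\<in>V. y v = 0 \<or> y v = z v) \<longrightarrow> clique_poly V E y > 0) \<longleftrightarrow> (\<forall>U\<subseteq>V. 0 < clique_poly U E z)"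
proof (intro iffI allI impI)
  fix U assume pos: "\<forall>y. (\<forall>v\<in>V. y v = 0 \<or> y v = z v) \<longrightarrow> clique_poly V E y > 0" and "U \<subseteq> V"
  define y where "y v = (if v \<in> U then z v else 0)" for v
  have "clique_poly V E y = clique_poly U E y"
    using assms \<open>U \<subseteq> V\<close> by (intro clique_poly_restrict) (auto simp: y_def)
  also have "\<dots> = clique_poly U E z"
    by (intro clique_poly_cong) (auto simp: y_def)
  moreover have "0 < clique_poly V E y"
    using pos by (simp add: y_def)
  ultimately show "0 < clique_poly U E z"
    by simp
next
  fix y assume pos: "\<forall>U\<subseteq>V. 0 < clique_poly U E z" and y: "\<forall>v\<in>V. y v = 0 \<or> y v = z v"
  define U where "U = {v\<in>V. y v \<noteq> 0}"
  have "clique_poly V E y = clique_poly U E y"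
    using assms by (intro clique_poly_restrict) (auto simp: U_def)
  also have "\<dots> = clique_poly U E z"
    using y by (intro clique_poly_cong) (auto simp: U_def)
  finally show "clique_poly V E y > 0"
    using pos by (simp add: U_def)
qed

lemma less_one_of_pos_clique_poly_box:
  assumes "finite V" "v \<in> V" "\<forall>u\<in>V. 0 \<le> x u"
    and pos: "\<forall>y. (\<forall>u\<in>V. 0 \<le> y u \<and> y u \<le> x u) \<longrightarrow> 0 < clique_poly V E y"
  shows "x v < 1"
proof -
  let ?y = "\<lambda>u. if u = v then x v else 0"
  have "clique_poly V E ?y = 1 - x v"
    using clique_poly_restrict[of V "{v}"] assms(1,2) by (simp add: clique_poly_singleton)
  moreover have "0 < clique_poly V E ?y"
    using pos assms(3) by simp
  ultimately show ?thesis
    by simp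
qed

section \<open>Traces\<close>

locale independence =
  fixes E :: "'v \<Rightarrow> 'v \<Rightarrow> bool"
  assumes sym: "E a b \<Longrightarrow> E b a" and irrefl: "\<not> E a a"
begin

definition trace_eq :: "'v list \<Rightarrow> 'v list \<Rightarrow> bool" (infix \<open>\<sim>\<close> 50) where
  "w \<sim> w' \<longleftrightarrow> (w, w') \<in> word_equiv E"

lemma swap_step_sym: "swap_step E w w' \<Longrightarrow> swap_step E w' w"
  unfolding swap_step_def using sym by blast

lemma trace_eq_iff_rtranclp: "w \<sim> w' \<longleftrightarrow> (swap_step E)\<^sup>*\<^sup>* w w'"
proof -
  have "(\<lambda>p q. swap_step E p q \<or> swap_step E q p) = swap_step E"
    using swap_step_sym by blast
  then show ?thesis
    by (simp add: trace_eq_def word_equiv_def)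
qed

lemma trace_eq_refl [simp]: "w \<sim> w"
  by (simp add: trace_eq_iff_rtranclp)

lemma trace_eq_sym: "w \<sim> w' \<Longrightarrow> w' \<sim> w"
  unfolding trace_eq_iff_rtranclp
  by (induction rule: rtranclp_induct) (auto intro: converse_rtranclp_into_rtranclp swap_step_sym)

lemma trace_eq_trans [trans]: "u \<sim> v \<Longrightarrow> v \<sim> w \<Longrightarrow> u \<sim> w"
  unfolding trace_eq_iff_rtranclp by (rule rtranclp_trans)

lemma trace_eq_swap: "E a b \<Longrightarrow> u @ [a, b] @ v \<sim> u @ [b, a] @ v"
  unfolding trace_eq_iff_rtranclp swap_step_def by blast

lemma trace_eq_invariant:
  assumes "\<And>w w'. swap_step E w w' \<Longrightarrow> f w = f w'" and "w \<sim> w'"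
  shows "f w = f w'"
  using assms(2)[unfolded trace_eq_iff_rtranclp]
  by (induction rule: rtranclp_induct) (auto dest: assms(1))

lemma trace_eq_congruence:
  assumes "\<And>w w'. swap_step E w w' \<Longrightarrow> g w \<sim> g w'" and "w \<sim> w'"
  shows "g w \<sim> g w'"
  using assms(2)[unfolded trace_eq_iff_rtranclp]
  by (induction rule: rtranclp_induct) (auto dest: assms(1) intro: trace_eq_trans)

lemma trace_eq_append: "u \<sim> u' \<Longrightarrow> v \<sim> v' \<Longrightarrow> u @ v \<sim> u' @ v'"
proof -
  have wrap: "p @ w @ s \<sim> p @ w' @ s" if "w \<sim> w'" for p w w' s
  proof (rule trace_eq_congruence[where g = "\<lambda>x. p @ x @ s", OF _ that])
    fix w w' assume "swap_step E w w'"
    then obtain u a b v where "w = u @ [a, b] @ v" "w' = u @ [b, a] @ v" "E a b"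
      unfolding swap_step_def by blast
    then show "p @ w @ s \<sim> p @ w' @ s"
      using trace_eq_swap[of a b "p @ u" "v @ s"] by simp
  qed
  assume "u \<sim> u'" "v \<sim> v'"
  then show ?thesis
    using wrap[of u u' "[]" v] wrap[of v v' u' "[]"] by (auto intro: trace_eq_trans)
qed

lemma trace_eq_append_right: "u \<sim> u' \<Longrightarrow> u @ v \<sim> u' @ v"
  by (rule trace_eq_append[OF _ trace_eq_refl])

lemma trace_eq_Cons: "u \<sim> u' \<Longrightarrow> a # u \<sim> a # u'"
  using trace_eq_append[of "[a]" "[a]"] by simp

lemma trace_eq_mset: "w \<sim> w' \<Longrightarrow> mset w = mset w'"
  by (rule trace_eq_invariant) (auto simp: swap_step_def)

lemma trace_eq_length: "w \<sim> w' \<Longrightarrow> length w = length w'"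
  by (metis trace_eq_mset size_mset)

lemma trace_eq_set: "w \<sim> w' \<Longrightarrow> set w = set w'"
  by (metis trace_eq_mset set_mset_mset)

lemma trace_eq_prod_list:
  "w \<sim> w' \<Longrightarrow> prod_list (map (y :: 'v \<Rightarrow> 'a :: comm_monoid_mult) w) = prod_list (map y w')"
  by (metis trace_eq_mset mset_map prod_mset_prod_list)

lemma swap_step_remove1: "swap_step E w w' \<Longrightarrow> remove1 a w \<sim> remove1 a w'"
proof -
  assume "swap_step E w w'"
  then obtain u b c v where w: "w = u @ [b, c] @ v" and w': "w' = u @ [c, b] @ v" and bc: "E b c"
    unfolding swap_step_def by blast
  have "b \<noteq> c"
    using bc irrefl by blast
  then show "remove1 a w \<sim> remove1 a w'"
    using w w' bc trace_eq_swap[of b c "remove1 a u" v] trace_eq_swap[of b c u "remove1 a v"]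
    by (cases "a \<in> set u"; cases "a = b"; cases "a = c") (auto simp: remove1_append)
qed

lemma trace_eq_remove1: "w \<sim> w' \<Longrightarrow> remove1 a w \<sim> remove1 a w'"
  by (rule trace_eq_congruence[where g = "remove1 a", OF swap_step_remove1])

lemma trace_eq_cancel_prefix: "p @ s \<sim> p @ s' \<Longrightarrow> s \<sim> s'"
proof (induction p)
  case (Cons a p)
  then show ?case
    using trace_eq_remove1[OF Cons.prems, of a] by simp
qed simp

definition movable :: "'v \<Rightarrow> 'v list \<Rightarrow> bool" where
  "movable a w \<longleftrightarrow> a \<in> set w \<and> (\<forall>b\<in>set (takeWhile (\<lambda>c. c \<noteq> a) w). E b a)"

lemma movable_Cons_self [simp]: "movable a (a # s)"
  by (simp add: movable_def)

lemma movable_Cons: "b \<noteq> a \<Longrightarrow> movable a (b # s) \<longleftrightarrow> E b a \<and> movable a s"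
  by (auto simp: movable_def)

lemma movable_append: "a \<notin> set p \<Longrightarrow> movable a (p @ s) \<longleftrightarrow> (\<forall>b\<in>set p. E b a) \<and> movable a s"
  by (induction p) (auto simp: movable_Cons)

lemma movable_append_prefix: "a \<in> set p \<Longrightarrow> \<forall>b\<in>set p. b = a \<or> E b a \<Longrightarrow> movable a (p @ s)"
proof (induction p)
  case (Cons b p)
  then show ?case
    by (cases "b = a") (auto simp: movable_Cons)
qed simp

lemma trace_eq_movable: "w \<sim> w' \<Longrightarrow> movable a w \<longleftrightarrow> movable a w'"
proof (rule trace_eq_invariant[where f = "movable a"])
  have "movable a w'" if step: "swap_step E w w'" and mv: "movable a w" for w w'
  proof -
    obtain u b c v where w: "w = u @ [b, c] @ v" and w': "w' = u @ [c, b] @ v" and bc: "E b c"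
      using step unfolding swap_step_def by blast
    have "b \<noteq> c"
      using bc irrefl by blast
    show ?thesis
    proof (cases "a \<in> set u")
      case True
      then obtain u1 u2 where "u = u1 @ a # u2" "a \<notin> set u1"
        by (meson split_list_first)
      then show ?thesis
        using mv w w' by (simp add: movable_append)
    next
      case False
      then show ?thesis
        using mv w w' bc \<open>b \<noteq> c\<close> sym
        by (cases "a = b"; cases "a = c") (auto simp: movable_append movable_Cons)
    qed
  qed
  then show "movable a w = movable a w'" if "swap_step E w w'" for w w'
    using that swap_step_sym by blast
qed

lemma movable_imp_trace_eq: "movable a w \<Longrightarrow> w \<sim> a # remove1 a w"
proof (induction w)
  case (Cons b w)
  show ?case
  proof (cases "b = a")
    case False
    with Cons.prems have "E b a" and "movable a w"
      by (auto simp: movable_Cons)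
    have "b # w \<sim> b # a # remove1 a w"
      using Cons.IH[OF \<open>movable a w\<close>] by (rule trace_eq_Cons)
    also have "\<dots> \<sim> a # b # remove1 a w"
      using trace_eq_swap[OF \<open>E b a\<close>, of "[]"] by simp
    finally show ?thesis
      using False by simp
  qed simp
qed (simp add: movable_def)

lemma movable_iff: "movable a w \<longleftrightarrow> (\<exists>s. w \<sim> a # s)"
  using movable_imp_trace_eq trace_eq_movable movable_Cons_self by blast

lemma movable_adjacent: "movable a w \<Longrightarrow> movable b w \<Longrightarrow> a \<noteq> b \<Longrightarrow> E a b"
  by (metis movable_Cons movable_iff trace_eq_movable)

lemma trace_eq_commute: "\<forall>b\<in>set p. E b a \<Longrightarrow> p @ [a] \<sim> a # p"
proof (induction p)
  case (Cons b p)
  then have "b # p @ [a] \<sim> b # a # p"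
    by (auto intro: trace_eq_Cons)
  also have "\<dots> \<sim> a # b # p"
    using trace_eq_swap[of b a "[]" p] Cons.prems by simp
  finally show ?case
    by simp
qed simp

lemma trace_eq_commute_replicate:
  "\<forall>b\<in>set p. E b a \<Longrightarrow> p @ replicate k a \<sim> replicate k a @ p"
proof (induction k)
  case (Suc k)
  have "p @ replicate (Suc k) a = (p @ [a]) @ replicate k a"
    by (simp add: replicate_app_Cons_same)
  also have "\<dots> \<sim> (a # p) @ replicate k a"
    using trace_eq_append[OF trace_eq_commute[OF Suc.prems] trace_eq_refl] .
  also have "\<dots> \<sim> a # (replicate k a @ p)"
    using trace_eq_Cons[OF Suc.IH[OF Suc.prems]] by simp
  finally show ?case
    by simp
qed simp

definition trace :: "'v list \<Rightarrow> 'v list set" where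
  "trace w = word_equiv E `` {w}"

lemma mem_trace [simp]: "w' \<in> trace w \<longleftrightarrow> w \<sim> w'"
  by (simp add: trace_def trace_eq_def)

lemma trace_eq_iff: "trace w = trace w' \<longleftrightarrow> w \<sim> w'"
proof
  assume "trace w = trace w'"
  then have "w' \<in> trace w"
    by simp
  then show "w \<sim> w'"
    by simp
next
  assume eq: "w \<sim> w'"
  show "trace w = trace w'"
  proof (rule set_eqI)
    fix u
    show "u \<in> trace w \<longleftrightarrow> u \<in> trace w'"
      using trace_eq_trans[OF trace_eq_sym[OF eq], of u] trace_eq_trans[OF eq, of u] by auto
  qed
qed

definition traces :: "'v set \<Rightarrow> 'v list set set" where
  "traces W = words W // word_equiv E"

lemma traces_iff: "C \<in> traces W \<longleftrightarrow> (\<exists>w. set w \<subseteq> W \<and> C = trace w)"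
  unfolding traces_def quotient_def words_def trace_def by blast

definition trace_rep :: "'v list set \<Rightarrow> 'v list" where
  "trace_rep C = (SOME w. w \<in> C)"

lemma trace_eq_trace_rep: "w \<sim> trace_rep (trace w)"
  unfolding trace_rep_def using someI[of "\<lambda>u. u \<in> trace w" w] by simp

lemma trace_trace_rep: "C \<in> traces W \<Longrightarrow> trace (trace_rep C) = C \<and> set (trace_rep C) \<subseteq> W"
proof -
  assume "C \<in> traces W"
  then obtain w where "set w \<subseteq> W" "C = trace w"
    by (auto simp: traces_iff)
  then show ?thesis
    using trace_eq_trace_rep[of w] trace_eq_set[of w] trace_eq_iff trace_eq_sym by auto
qed

definition trace_weight :: "('v \<Rightarrow> real) \<Rightarrow> 'v list set \<Rightarrow> real" where
  "trace_weight y C = prod_list (map y (trace_rep C))"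

definition trace_length :: "'v list set \<Rightarrow> nat" where
  "trace_length C = length (trace_rep C)"

lemma trace_weight_trace [simp]: "trace_weight y (trace w) = prod_list (map y w)"
  unfolding trace_weight_def using trace_eq_prod_list[OF trace_eq_trace_rep[of w], of y] by simp

lemma trace_length_trace [simp]: "trace_length (trace w) = length w"
  unfolding trace_length_def using trace_eq_length[OF trace_eq_trace_rep[of w]] by simp

lemma trace_weight_nonneg: "C \<in> traces W \<Longrightarrow> \<forall>v\<in>W. 0 \<le> y v \<Longrightarrow> 0 \<le> trace_weight y C"
  by (fastforce simp: traces_iff intro!: prod_list_nonneg)

lemma trace_weight_mono:
  "C \<in> traces W \<Longrightarrow> \<forall>v\<in>W. 0 \<le> y v \<and> y v \<le> z v \<Longrightarrow> trace_weight y C \<le> trace_weight z C"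
  by (fastforce simp: traces_iff intro!: prod_list_map_mono)

definition traces_of_length :: "'v set \<Rightarrow> nat \<Rightarrow> 'v list set set" where
  "traces_of_length W n = {C \<in> traces W. trace_length C = n}"

lemma traces_of_length_iff:
  "C \<in> traces_of_length W n \<longleftrightarrow> (\<exists>w. set w \<subseteq> W \<and> length w = n \<and> C = trace w)"
  unfolding traces_of_length_def traces_iff by auto

lemma finite_traces_of_length: "finite W \<Longrightarrow> finite (traces_of_length W n)"
proof -
  assume "finite W"
  have "traces_of_length W n \<subseteq> trace ` {w. set w \<subseteq> W \<and> length w = n}"
    by (auto simp: traces_of_length_iff)
  then show ?thesis
    by (rule finite_surj[OF finite_lists_length_eq[OF \<open>finite W\<close>]])
qed

definition trace_sum :: "'v set \<Rightarrow> ('v \<Rightarrow> real) \<Rightarrow> nat \<Rightarrow> real" where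
  "trace_sum W y n = (\<Sum>C\<in>traces_of_length W n. trace_weight y C)"

lemma trace_sum_nonneg: "\<forall>v\<in>W. 0 \<le> y v \<Longrightarrow> 0 \<le> trace_sum W y n"
  unfolding trace_sum_def traces_of_length_def by (auto intro!: sum_nonneg trace_weight_nonneg)

lemma trace_sum_mono: "\<forall>v\<in>W. 0 \<le> y v \<and> y v \<le> z v \<Longrightarrow> trace_sum W y n \<le> trace_sum W z n"
  unfolding trace_sum_def traces_of_length_def by (auto intro!: sum_mono trace_weight_mono)

lemma trace_sum_subset:
  assumes "finite V" "U \<subseteq> V" "\<forall>v\<in>V. 0 \<le> y v"
  shows "trace_sum U y n \<le> trace_sum V y n"
  unfolding trace_sum_def
proof (rule sum_mono2)
  show "finite (traces_of_length V n)"
    using assms(1) by (rule finite_traces_of_length)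
  show "traces_of_length U n \<subseteq> traces_of_length V n"
    using assms(2) by (fastforce simp: traces_of_length_iff)
  show "0 \<le> trace_weight y C" if "C \<in> traces_of_length V n - traces_of_length U n" for C
    using that assms(3) by (auto simp: traces_of_length_def intro: trace_weight_nonneg)
qed

definition min_letters :: "'v list set \<Rightarrow> 'v set" where
  "min_letters C = {a. \<exists>s. a # s \<in> C}"

lemma min_letters_trace: "min_letters (trace w) = {a. movable a w}"
  unfolding min_letters_def using movable_iff by auto

lemma min_letters_subset: "min_letters (trace w) \<subseteq> set w"
  by (auto simp: min_letters_trace movable_def)

lemma min_letters_empty_iff: "min_letters (trace w) = {} \<longleftrightarrow> w = []"
  by (cases w) (auto simp: min_letters_trace movable_def)

lemma is_clique_min_letters: "is_clique E (min_letters (trace w))"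
  unfolding is_clique_def min_letters_trace using movable_adjacent by blast

section \<open>The Cartier-Foata identity\<close>

definition cliques :: "'v set \<Rightarrow> 'v set set" where
  "cliques W = {K. K \<subseteq> W \<and> is_clique E K}"

lemma finite_cliques: "finite W \<Longrightarrow> finite (cliques W)"
  unfolding cliques_def by (rule finite_subset[of _ "Pow W"]) auto

definition clique_word :: "'v set \<Rightarrow> 'v list" where
  "clique_word K = (SOME k. distinct k \<and> set k = K)"

lemma clique_word: "finite K \<Longrightarrow> distinct (clique_word K) \<and> set (clique_word K) = K"
proof -
  assume "finite K"
  then obtain k where "set k = K" "distinct k"
    using finite_distinct_list by blast
  then show ?thesis
    unfolding clique_word_def using someI[of "\<lambda>k. distinct k \<and> set k = K" k] by simp
qed

lemma length_clique_word: "finite K \<Longrightarrow> length (clique_word K) = card K"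
  using clique_word[of K] distinct_card[of "clique_word K"] by simp

lemma prod_list_clique_word: "finite K \<Longrightarrow> prod_list (map y (clique_word K)) = prod y K"
  using clique_word[of K] prod.distinct_set_conv_list[of "clique_word K" y] by simp

lemma trace_eq_movable_prefix:
  "distinct k \<Longrightarrow> \<forall>a\<in>set k. movable a w \<Longrightarrow> \<exists>s. w \<sim> k @ s"
proof (induction k arbitrary: w)
  case (Cons a k)
  have w: "w \<sim> a # remove1 a w"
    using Cons.prems by (intro movable_imp_trace_eq) auto
  have "movable b (remove1 a w)" if "b \<in> set k" for b
  proof -
    have "b \<noteq> a" "movable b w"
      using that Cons.prems by auto
    then show ?thesis
      using trace_eq_movable[OF w] by (simp add: movable_Cons)
  qed
  then obtain s where "remove1 a w \<sim> k @ s"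
    using Cons.IH[of "remove1 a w"] Cons.prems(1) by auto
  then have "w \<sim> (a # k) @ s"
    using trace_eq_trans[OF w trace_eq_Cons] by simp
  then show ?case ..
qed (auto intro: trace_eq_refl)

lemma trace_eq_clique_prefix_iff:
  assumes "finite K" "is_clique E K"
  shows "(\<exists>s. w \<sim> clique_word K @ s) \<longleftrightarrow> K \<subseteq> min_letters (trace w)"
proof
  assume "\<exists>s. w \<sim> clique_word K @ s"
  then obtain s where s: "w \<sim> clique_word K @ s" ..
  have "movable a (clique_word K @ s)" if "a \<in> K" for a
    using that assms clique_word[OF assms(1)] by (intro movable_append_prefix) (auto simp: is_clique_def)
  then show "K \<subseteq> min_letters (trace w)"
    using trace_eq_movable[OF s] by (auto simp: min_letters_trace)
next
  assume "K \<subseteq> min_letters (trace w)"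
  then show "\<exists>s. w \<sim> clique_word K @ s"
    using clique_word[OF assms(1)] by (intro trace_eq_movable_prefix) (auto simp: min_letters_trace)
qed

definition clique_mult :: "'v set \<Rightarrow> 'v list set \<Rightarrow> 'v list set" where
  "clique_mult K D = trace (clique_word K @ trace_rep D)"

text \<open>\<open>clique_quot K C\<close> is only meaningful when \<open>K \<subseteq> min_letters C\<close>; otherwise the choice
  is over an empty set.\<close>

definition clique_quot :: "'v set \<Rightarrow> 'v list set \<Rightarrow> 'v list set" where
  "clique_quot K C = trace (SOME s. clique_word K @ s \<in> C)"

lemma clique_quot_mult: "D \<in> traces W \<Longrightarrow> clique_quot K (clique_mult K D) = D"
proof -
  assume D: "D \<in> traces W"
  let ?P = "\<lambda>s. clique_word K @ s \<in> clique_mult K D"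
  have "?P (trace_rep D)"
    by (simp add: clique_mult_def)
  then have "?P (SOME s. ?P s)"
    by (rule someI)
  then have "clique_word K @ trace_rep D \<sim> clique_word K @ (SOME s. ?P s)"
    by (simp add: clique_mult_def)
  then have "trace (trace_rep D) = clique_quot K (clique_mult K D)"
    unfolding clique_quot_def trace_eq_iff by (rule trace_eq_cancel_prefix)
  then show ?thesis
    using trace_trace_rep[OF D] by simp
qed

lemma trace_eq_clique_quot:
  assumes "finite K" "is_clique E K" "K \<subseteq> min_letters (trace w)"
  shows "w \<sim> clique_word K @ (SOME s. clique_word K @ s \<in> trace w)"
proof -
  obtain s where "w \<sim> clique_word K @ s"
    using trace_eq_clique_prefix_iff[OF assms(1,2)] assms(3) by blast
  then have "clique_word K @ s \<in> trace w"
    by simp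
  then show ?thesis
    using someI[of "\<lambda>s. clique_word K @ s \<in> trace w" s] by simp
qed

lemma clique_mult_quot:
  assumes K: "finite K" "is_clique E K" and C: "C \<in> traces W" "K \<subseteq> min_letters C"
  shows "clique_mult K (clique_quot K C) = C"
proof -
  obtain w where w: "C = trace w"
    using C(1) traces_iff by blast
  let ?s = "SOME s. clique_word K @ s \<in> trace w"
  have "clique_word K @ trace_rep (clique_quot K C) \<sim> clique_word K @ ?s"
    unfolding clique_quot_def w by (intro trace_eq_append trace_eq_refl trace_eq_sym[OF trace_eq_trace_rep])
  also have "\<dots> \<sim> w"
    using trace_eq_clique_quot[OF K] C(2) w by (blast intro: trace_eq_sym)
  finally show ?thesis
    by (simp add: clique_mult_def w trace_eq_iff)
qed

lemma clique_mult_traces_of_length: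
  assumes "finite K" "K \<subseteq> W" "D \<in> traces_of_length W m"
  shows "clique_mult K D \<in> traces_of_length W (card K + m)"
proof -
  have "set (trace_rep D) \<subseteq> W" "length (trace_rep D) = m"
    using assms(3) trace_trace_rep by (auto simp: traces_of_length_def trace_length_def)
  then show ?thesis
    unfolding clique_mult_def traces_of_length_iff
    using assms(1,2) clique_word[OF assms(1)] length_clique_word[OF assms(1)]
    by (intro exI[of _ "clique_word K @ trace_rep D"]) auto
qed

lemma min_letters_clique_mult:
  "finite K \<Longrightarrow> is_clique E K \<Longrightarrow> K \<subseteq> min_letters (clique_mult K D)"
  unfolding clique_mult_def using trace_eq_clique_prefix_iff trace_eq_refl by blast

lemma clique_quot_traces_of_length:
  assumes K: "finite K" "is_clique E K" and C: "C \<in> traces_of_length W n" "K \<subseteq> min_letters C"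
  shows "card K \<le> n \<and> clique_quot K C \<in> traces_of_length W (n - card K)"
proof -
  obtain w where w: "set w \<subseteq> W" "length w = n" "C = trace w"
    using C(1) traces_of_length_iff by blast
  let ?s = "SOME s. clique_word K @ s \<in> trace w"
  have s: "w \<sim> clique_word K @ ?s"
    using trace_eq_clique_quot[OF K] C(2) w(3) by blast
  have "card K \<le> n"
    using trace_eq_length[OF s] w(2) length_clique_word[OF K(1)] by simp
  moreover have "set ?s \<subseteq> W" "length ?s = n - card K"
    using trace_eq_set[OF s] trace_eq_length[OF s] w length_clique_word[OF K(1)] by auto
  ultimately show ?thesis
    unfolding clique_quot_def traces_of_length_iff w(3) by blast
qed

lemma trace_weight_clique_mult:
  "finite K \<Longrightarrow> trace_weight y (clique_mult K D) = prod y K * trace_weight y D"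
  by (simp add: clique_mult_def trace_weight_def[of y D] prod_list_clique_word)

lemma bij_betw_clique_mult:
  assumes N: "finite N" "N \<subseteq> W"
  shows "bij_betw (\<lambda>(K, D). (clique_mult K D, K))
    (SIGMA K:{K \<in> cliques N. card K \<le> n}. traces_of_length W (n - card K))
    (SIGMA C:traces_of_length W n. Pow (min_letters C \<inter> N))"
    (is "bij_betw ?f ?S ?T")
proof -
  let ?g = "\<lambda>(C, K). (K, clique_quot K C)"
  have left: "?g (?f p) = p \<and> ?f p \<in> ?T" if mem: "p \<in> ?S" for p
  proof -
    obtain K D where p: "p = (K, D)" and K: "K \<in> cliques N" "card K \<le> n"
      and D: "D \<in> traces_of_length W (n - card K)"
      using mem by blast
    have fK: "finite K" "K \<subseteq> W" "is_clique E K"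
      using K N finite_subset by (auto simp: cliques_def)
    have "clique_quot K (clique_mult K D) = D"
      using D clique_quot_mult[of D W K] by (simp add: traces_of_length_def)
    moreover have "clique_mult K D \<in> traces_of_length W n"
      using clique_mult_traces_of_length[OF fK(1,2) D] K(2) by simp
    ultimately show ?thesis
      using min_letters_clique_mult[OF fK(1,3)] K(1) p by (auto simp: cliques_def)
  qed
  have right: "?f (?g q) = q \<and> ?g q \<in> ?S" if mem: "q \<in> ?T" for q
  proof -
    obtain C K where q: "q = (C, K)" and C: "C \<in> traces_of_length W n"
      and K: "K \<subseteq> min_letters C" "K \<subseteq> N"
      using mem by blast
    obtain w where "C = trace w"
      using C traces_of_length_iff by blast
    then have cK: "is_clique E K"
      using K(1) is_clique_min_letters[of w] unfolding is_clique_def by blast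
    have fK: "finite K"
      using K(2) N finite_subset by blast
    have "C \<in> traces W"
      using C by (simp add: traces_of_length_def)
    then have "clique_mult K (clique_quot K C) = C"
      using clique_mult_quot[OF fK cK _ K(1)] by blast
    then show ?thesis
      using clique_quot_traces_of_length[OF fK cK C K(1)] K(2) cK q by (auto simp: cliques_def)
  qed
  show ?thesis
  proof (rule bij_betw_byWitness[where f' = ?g])
    show "\<forall>p\<in>?S. ?g (?f p) = p" "\<forall>q\<in>?T. ?f (?g q) = q"
      by (simp_all add: left right)
    show "?f ` ?S \<subseteq> ?T"
      by (intro image_subsetI conjunct2[OF left])
    show "?g ` ?T \<subseteq> ?S"
      by (intro image_subsetI conjunct2[OF right])
  qed
qed

text \<open>A trace \<open>C\<close> is counted once for each clique \<open>K \<subseteq> min_letters C \<inter> N\<close>, with sign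
  \<open>(-1)\<^bsup>|K|\<^esup>\<close>; these contributions cancel unless \<open>min_letters C \<inter> N = {}\<close>.\<close>

lemma sum_cliques_trace_sum:
  assumes W: "finite W" and N: "N \<subseteq> W"
  shows "(\<Sum>K | K \<in> cliques N \<and> card K \<le> n. (-1) ^ card K * prod y K * trace_sum W y (n - card K))
       = (\<Sum>C | C \<in> traces_of_length W n \<and> min_letters C \<inter> N = {}. trace_weight y C)"
proof -
  have finN: "finite N"
    using W N finite_subset by blast
  let ?S = "SIGMA K:{K \<in> cliques N. card K \<le> n}. traces_of_length W (n - card K)"
  let ?T = "SIGMA C:traces_of_length W n. Pow (min_letters C \<inter> N)"
  have "(\<Sum>K | K \<in> cliques N \<and> card K \<le> n. (-1) ^ card K * prod y K * trace_sum W y (n - card K))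
      = (\<Sum>K | K \<in> cliques N \<and> card K \<le> n. \<Sum>D\<in>traces_of_length W (n - card K).
           (-1) ^ card K * trace_weight y (clique_mult K D))"
  proof (rule sum.cong[OF refl])
    fix K assume "K \<in> {K. K \<in> cliques N \<and> card K \<le> n}"
    then have "finite K"
      using finN finite_subset by (auto simp: cliques_def)
    then show "(-1) ^ card K * prod y K * trace_sum W y (n - card K)
        = (\<Sum>D\<in>traces_of_length W (n - card K). (-1) ^ card K * trace_weight y (clique_mult K D))"
      by (simp add: trace_sum_def sum_distrib_left trace_weight_clique_mult mult.assoc)
  qed
  also have "\<dots> = (\<Sum>(K, D)\<in>?S. (-1) ^ card K * trace_weight y (clique_mult K D))"
    by (rule sum.Sigma) (simp_all add: finite_cliques finN finite_traces_of_length W)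
  also have "\<dots> = (\<Sum>p\<in>?S. (\<lambda>(C, K). (-1) ^ card K * trace_weight y C) ((\<lambda>(K, D). (clique_mult K D, K)) p))"
    by (rule sum.cong) auto
  also have "\<dots> = (\<Sum>(C, K)\<in>?T. (-1) ^ card K * trace_weight y C)"
    by (rule sum.reindex_bij_betw[OF bij_betw_clique_mult[OF finN N]])
  also have "\<dots> = (\<Sum>C\<in>traces_of_length W n. (\<Sum>K\<in>Pow (min_letters C \<inter> N). (-1) ^ card K) * trace_weight y C)"
    by (subst sum.Sigma[symmetric]) (auto simp: finite_traces_of_length W finN sum_distrib_right)
  also have "\<dots> = (\<Sum>C\<in>traces_of_length W n. if min_letters C \<inter> N = {} then trace_weight y C else 0)"
    using finN by (intro sum.cong refl) (simp add: sum_Pow_alternating del: Pow_Int_eq)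
  also have "\<dots> = (\<Sum>C | C \<in> traces_of_length W n \<and> min_letters C \<inter> N = {}. trace_weight y C)"
    by (simp add: sum.inter_filter finite_traces_of_length W)
  finally show ?thesis .
qed

definition clique_fps :: "'v set \<Rightarrow> ('v \<Rightarrow> real) \<Rightarrow> real fps" where
  "clique_fps N y = (\<Sum>K\<in>cliques N. fps_const ((-1) ^ card K * prod y K) * fps_X ^ card K)"

definition trace_fps :: "'v set \<Rightarrow> ('v \<Rightarrow> real) \<Rightarrow> real fps" where
  "trace_fps W y = Abs_fps (trace_sum W y)"

lemma clique_fps_mult_nth:
  "finite N \<Longrightarrow> (clique_fps N y * F) $ n
     = (\<Sum>K | K \<in> cliques N \<and> card K \<le> n. (-1) ^ card K * prod y K * F $ (n - card K))"
  by (simp add: clique_fps_def sum_distrib_right fps_sum_nth mult.assoc fps_X_power_mult_nth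
      sum.inter_filter finite_cliques) (intro sum.cong; simp)

lemma clique_fps_mult_trace_fps_nth:
  assumes "finite W" "N \<subseteq> W"
  shows "(clique_fps N y * trace_fps W y) $ n
       = (\<Sum>C | C \<in> traces_of_length W n \<and> min_letters C \<inter> N = {}. trace_weight y C)"
proof -
  have "finite N"
    using assms finite_subset by blast
  then show ?thesis
    using sum_cliques_trace_sum[OF assms] by (simp add: clique_fps_mult_nth trace_fps_def)
qed

lemma clique_fps_mult_trace_fps: "finite W \<Longrightarrow> clique_fps W y * trace_fps W y = 1"
proof (rule fps_ext)
  fix n
  have "C \<in> traces_of_length W n \<and> min_letters C \<inter> W = {} \<longleftrightarrow> n = 0 \<and> C = trace []" for C
  proof
    assume "C \<in> traces_of_length W n \<and> min_letters C \<inter> W = {}"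
    then obtain w where "set w \<subseteq> W" "length w = n" "C = trace w" "min_letters (trace w) \<inter> W = {}"
      by (auto simp: traces_of_length_iff)
    moreover from this have "min_letters (trace w) = {}"
      using min_letters_subset by blast
    ultimately show "n = 0 \<and> C = trace []"
      by (simp add: min_letters_empty_iff)
  next
    assume "n = 0 \<and> C = trace []"
    then show "C \<in> traces_of_length W n \<and> min_letters C \<inter> W = {}"
      using min_letters_empty_iff[of "[]"] by (auto simp: traces_of_length_iff)
  qed
  then have "{C. C \<in> traces_of_length W n \<and> min_letters C \<inter> W = {}} = (if n = 0 then {trace []} else {})"
    by auto
  moreover assume "finite W"
  ultimately show "(clique_fps W y * trace_fps W y) $ n = 1 $ n"
    by (simp add: clique_fps_mult_trace_fps_nth)
qed

lemma clique_fps_nonneg_nth: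
  "finite W \<Longrightarrow> N \<subseteq> W \<Longrightarrow> \<forall>v\<in>W. 0 \<le> y v \<Longrightarrow> 0 \<le> (clique_fps N y * trace_fps W y) $ n"
  by (auto simp: clique_fps_mult_trace_fps_nth traces_of_length_def intro!: sum_nonneg trace_weight_nonneg)

lemma clique_fps_mult_sums:
  assumes "finite N" and F: "summable (\<lambda>n. F $ n)"
  shows "(\<lambda>n. (clique_fps N y * F) $ n) sums (clique_poly N E y * suminf (\<lambda>n. F $ n))"
proof -
  have shift: "(\<lambda>n. (fps_X ^ k * F) $ n) sums suminf (\<lambda>n. F $ n)" for k
  proof -
    have "(\<lambda>i. (fps_X ^ k * F) $ (i + k)) sums suminf (\<lambda>n. F $ n)"
      using summable_sums[OF F] by (simp add: fps_X_power_mult_nth)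
    then have "(\<lambda>n. (fps_X ^ k * F) $ n) sums (suminf (\<lambda>n. F $ n) + (\<Sum>i<k. (fps_X ^ k * F) $ i))"
      by (rule sums_iff_shift[THEN iffD1])
    then show ?thesis
      by (simp add: fps_X_power_mult_nth)
  qed
  have "(\<lambda>n. \<Sum>K\<in>cliques N. (-1) ^ card K * prod y K * (fps_X ^ card K * F) $ n)
          sums (\<Sum>K\<in>cliques N. (-1) ^ card K * prod y K * suminf (\<lambda>n. F $ n))"
    by (intro sums_sum sums_mult shift)
  then show ?thesis
    by (simp add: clique_fps_def clique_poly_def cliques_def sum_distrib_right fps_sum_nth mult.assoc)
qed

lemma clique_poly_mult_suminf:
  assumes "finite W" "summable (trace_sum W y)"
  shows "clique_poly W E y * suminf (trace_sum W y) = 1"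
proof -
  have "(\<lambda>n. (1 :: real fps) $ n) sums (clique_poly W E y * suminf (trace_sum W y))"
    using clique_fps_mult_sums[OF assms(1), of "trace_fps W y" y] assms(2)
    unfolding clique_fps_mult_trace_fps[OF assms(1)] by (simp add: trace_fps_def)
  moreover have "(\<lambda>n. (1 :: real fps) $ n) sums 1"
    using sums_single[of 0 "\<lambda>_. 1 :: real"] by simp
  ultimately show ?thesis
    using sums_unique2 by blast
qed

lemma sum_cliques_remove_vertex:
  assumes "finite W" "v \<in> W"
  shows "(\<Sum>K\<in>cliques W. g K)
       = (\<Sum>K\<in>cliques (W - {v}). g K) + (\<Sum>K\<in>cliques {u\<in>W. E v u}. g (insert v K))"
proof -
  let ?N = "{u\<in>W. E v u}"
  have vN: "v \<notin> K" if "K \<in> cliques ?N" for K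
    using that irrefl by (auto simp: cliques_def)
  have "cliques W = cliques (W - {v}) \<union> insert v ` cliques ?N"
  proof (intro set_eqI iffI)
    fix K assume K: "K \<in> cliques W"
    show "K \<in> cliques (W - {v}) \<union> insert v ` cliques ?N"
    proof (cases "v \<in> K")
      case True
      then have "K - {v} \<in> cliques ?N" "K = insert v (K - {v})"
        using K by (auto simp: cliques_def is_clique_def)
      then show ?thesis
        by blast
    qed (use K in \<open>auto simp: cliques_def\<close>)
  qed (use assms(2) sym in \<open>auto simp: cliques_def is_clique_def\<close>)
  moreover have "inj_on (insert v) (cliques ?N)"
    using vN by (intro inj_onI) (metis insert_ident)
  moreover have "cliques (W - {v}) \<inter> insert v ` cliques ?N = {}"
    by (auto simp: cliques_def)
  ultimately show ?thesis
    using assms(1) by (simp add: sum.union_disjoint finite_cliques sum.reindex)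
qed

lemma neighbour_cliques:
  "finite W \<Longrightarrow> K \<in> cliques {u\<in>W. E v u} \<Longrightarrow> finite K \<and> v \<notin> K"
  using irrefl by (auto simp: cliques_def intro: finite_subset)

lemma clique_poly_remove_vertex:
  assumes "finite W" "v \<in> W"
  shows "clique_poly W E y = clique_poly (W - {v}) E y - y v * clique_poly {u\<in>W. E v u} E y"
  using sum_cliques_remove_vertex[OF assms, of "\<lambda>K. (-1) ^ card K * prod y K"]
    neighbour_cliques[OF assms(1)]
  by (simp add: clique_poly_def cliques_def[symmetric] sum_distrib_left sum_negf mult.left_commute)

lemma clique_fps_remove_vertex:
  assumes "finite W" "v \<in> W"
  shows "clique_fps W y = clique_fps (W - {v}) y - fps_const (y v) * fps_X * clique_fps {u\<in>W. E v u} y"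
proof -
  let ?t = "\<lambda>K. fps_const ((-1) ^ card K * prod y K) * fps_X ^ card K"
  have insert_term: "?t (insert v K) = - (fps_const (y v) * fps_X * ?t K)" if "K \<in> cliques {u\<in>W. E v u}" for K
    using neighbour_cliques[OF assms(1) that] by (intro fps_ext) (simp add: mult.assoc)
  have "clique_fps W y = clique_fps (W - {v}) y + (\<Sum>K\<in>cliques {u\<in>W. E v u}. ?t (insert v K))"
    unfolding clique_fps_def by (rule sum_cliques_remove_vertex[OF assms])
  also have "(\<Sum>K\<in>cliques {u\<in>W. E v u}. ?t (insert v K)) = - (fps_const (y v) * fps_X * clique_fps {u\<in>W. E v u} y)"
    unfolding clique_fps_def sum_distrib_left sum_negf[symmetric] by (rule sum.cong[OF refl insert_term])
  finally show ?thesis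
    by simp
qed

lemma trace_fps_remove_vertex:
  assumes "finite W" "v \<in> W"
  shows "trace_fps W y = trace_fps (W - {v}) y
    + fps_const (y v) * (fps_X * ((clique_fps {u\<in>W. E v u} y * trace_fps (W - {v}) y) * trace_fps W y))"
proof -
  let ?F = "trace_fps W y" and ?F' = "trace_fps (W - {v}) y" and ?N = "{u\<in>W. E v u}"
  have "?F = (clique_fps (W - {v}) y * ?F') * ?F"
    using assms(1) by (simp add: clique_fps_mult_trace_fps)
  also have "\<dots> = ?F' * (clique_fps W y * ?F) + fps_const (y v) * (fps_X * ((clique_fps ?N y * ?F') * ?F))"
    by (simp add: clique_fps_remove_vertex[OF assms] algebra_simps)
  finally show ?thesis
    using assms(1) by (simp add: clique_fps_mult_trace_fps)
qed

lemma summable_trace_sum_insert_vertex: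
  assumes W: "finite W" "v \<in> W" and y: "\<forall>u\<in>W. 0 \<le> y u"
    and pos: "0 < clique_poly W E y" "0 < clique_poly (W - {v}) E y"
    and summable': "summable (trace_sum (W - {v}) y)"
  shows "summable (trace_sum W y)"
proof -
  let ?W' = "W - {v}" and ?N = "{u\<in>W. E v u}"
  let ?P = "clique_fps ?N y * trace_fps ?W' y"
  define B where "B = suminf (trace_sum ?W' y)"
  have KB: "clique_poly ?W' E y * B = 1"
    unfolding B_def using W summable' by (intro clique_poly_mult_suminf) auto
  then have "B = 1 / clique_poly ?W' E y"
    using pos(2) by (simp add: field_simps)
  then have "0 < clique_poly W E y * B"
    using pos by simp
  then have mass: "y v * (clique_poly ?N E y * B) < 1"
    using KB clique_poly_remove_vertex[OF W, of y] by (simp add: algebra_simps)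
  have "summable (\<lambda>n. trace_fps W y $ n)"
  proof (rule summable_fps_renewal)
    show "trace_fps W y = trace_fps ?W' y + fps_const (y v) * (fps_X * (?P * trace_fps W y))"
      by (rule trace_fps_remove_vertex[OF W])
    show summable: "summable (\<lambda>n. trace_fps ?W' y $ n)"
      using summable' by (simp add: trace_fps_def)
    have "finite ?N"
      using W by simp
    then show "(\<lambda>n. ?P $ n) sums (clique_poly ?N E y * B)"
      using clique_fps_mult_sums[OF _ summable, of ?N y] by (simp add: B_def trace_fps_def)
    show "0 \<le> trace_fps W y $ n" "0 \<le> trace_fps ?W' y $ n" for n
      using y by (simp_all add: trace_fps_def trace_sum_nonneg)
    show "0 \<le> ?P $ n" for n
      using W y irrefl by (intro clique_fps_nonneg_nth) auto
    show "0 \<le> y v"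
      using y W by simp
  qed (rule mass)
  then show ?thesis
    by (simp add: trace_fps_def)
qed

lemma summable_trace_sum:
  "finite W \<Longrightarrow> \<forall>v\<in>W. 0 \<le> y v \<Longrightarrow> \<forall>U\<subseteq>W. 0 < clique_poly U E y \<Longrightarrow> summable (trace_sum W y)"
proof (induction W rule: finite_psubset_induct)
  case (psubset W)
  show ?case
  proof (cases "W = {}")
    case True
    then have "traces_of_length W n = (if n = 0 then {trace []} else {})" for n
      by (auto simp: traces_of_length_iff)
    then have "trace_sum W y = (\<lambda>n. if n = 0 then 1 else 0)"
      by (simp add: trace_sum_def fun_eq_iff)
    then show ?thesis
      using sums_single[of 0 "\<lambda>_. 1 :: real"] sums_summable by simp
  next
    case False
    then obtain v where v: "v \<in> W"
      by blast
    have "summable (trace_sum (W - {v}) y)"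
      using psubset.IH[of "W - {v}"] psubset.prems v by auto
    then show ?thesis
      using psubset.prems by (intro summable_trace_sum_insert_vertex[OF psubset.hyps v]) auto
  qed
qed

section \<open>Reduced words\<close>

definition reducible :: "'v list \<Rightarrow> bool" where
  "reducible w \<longleftrightarrow> (\<exists>p c q s. w = p @ [c] @ q @ [c] @ s \<and> (\<forall>d\<in>set q. d = c \<or> E d c))"

lemma reducible_imp_not_reduced_word: "reducible w \<Longrightarrow> \<not> reduced_word E w"
proof
  assume "reducible w" and r: "reduced_word E w"
  then obtain p c q s where w: "w = p @ [c] @ q @ [c] @ s" and q: "\<forall>d\<in>set q. d = c \<or> E d c"
    unfolding reducible_def by blast
  define i where "i = length p"
  define j where "j = length p + 1 + length q"
  have "i < j" "j < length w" "w ! i = w ! j"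
    unfolding i_def j_def w by (auto simp: nth_append)
  then obtain k where k: "i < k" "k < j" "w ! k \<noteq> w ! i" "\<not> E (w ! k) (w ! i)"
    using r unfolding reduced_word_def by blast
  have "w ! k = q ! (k - i - 1)" "k - i - 1 < length q"
    using k unfolding i_def j_def w by (auto simp: nth_append)
  then have "w ! k \<in> set q"
    by simp
  moreover have "w ! i = c"
    unfolding i_def w by simp
  ultimately show False
    using q k by blast
qed

lemma not_reduced_word_imp_reducible: "\<not> reduced_word E w \<Longrightarrow> reducible w"
proof -
  assume "\<not> reduced_word E w"
  then obtain i j where ij: "i < j" "j < length w" "w ! i = w ! j"
    and between: "\<forall>k. i < k \<and> k < j \<longrightarrow> w ! k = w ! i \<or> E (w ! k) (w ! i)"
    unfolding reduced_word_def by blast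
  define q where "q = take (j - i - 1) (drop (Suc i) w)"
  have w1: "w = take i w @ w ! i # drop (Suc i) w"
    by (rule id_take_nth_drop) (use ij in linarith)
  have "drop (Suc i) w = q @ drop (Suc i) w ! (j - i - 1) # drop (Suc (j - i - 1)) (drop (Suc i) w)"
    unfolding q_def by (rule id_take_nth_drop) (use ij in simp)
  moreover have "drop (Suc i) w ! (j - i - 1) = w ! j" "drop (Suc (j - i - 1)) (drop (Suc i) w) = drop (Suc j) w"
    using ij by simp_all
  ultimately have w2: "drop (Suc i) w = q @ w ! j # drop (Suc j) w"
    by simp
  have "\<forall>d\<in>set q. d = w ! i \<or> E d (w ! i)"
  proof
    fix d assume "d \<in> set q"
    then obtain l where "l < length q" "d = q ! l"
      by (auto simp: in_set_conv_nth)
    then show "d = w ! i \<or> E d (w ! i)"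
      using between[rule_format, of "Suc i + l"] ij by (auto simp: q_def)
  qed
  moreover have "w = take i w @ [w ! i] @ q @ [w ! i] @ drop (Suc j) w"
    using w1 w2 ij(3) by simp
  ultimately show "reducible w"
    unfolding reducible_def by blast
qed

lemma reduced_word_iff: "reduced_word E w \<longleftrightarrow> \<not> reducible w"
  using reducible_imp_not_reduced_word not_reduced_word_imp_reducible by blast

lemma not_reducible_Nil: "\<not> reducible []"
  by (simp add: reducible_def)

lemma reducible_append: "reducible w \<Longrightarrow> reducible (p @ w)"
proof -
  assume "reducible w"
  then obtain p' c q s where "w = p' @ [c] @ q @ [c] @ s" "\<forall>d\<in>set q. d = c \<or> E d c"
    unfolding reducible_def by blast
  then show "reducible (p @ w)"
    unfolding reducible_def by (intro exI[of _ "p @ p'"] exI[of _ c] exI[of _ q] exI[of _ s]) simp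
qed

lemma reducible_Cons_of_movable: "movable a w \<Longrightarrow> reducible (a # w)"
proof -
  assume "movable a w"
  then obtain p q where w: "w = p @ a # q" "a \<notin> set p"
    unfolding movable_def by (meson split_list_first)
  then have "\<forall>d\<in>set p. E d a"
    using \<open>movable a w\<close> by (simp add: movable_append)
  then show "reducible (a # w)"
    unfolding reducible_def using w by (intro exI[of _ "[]"] exI[of _ a] exI[of _ p] exI[of _ q]) simp
qed

lemma reducible_ConsE:
  assumes "reducible (a # w)" and "\<not> reducible w"
  obtains q s where "w = q @ a # s" "\<forall>d\<in>set q. E d a"
proof -
  obtain p c q s where w: "a # w = p @ [c] @ q @ [c] @ s" and q: "\<forall>d\<in>set q. d = c \<or> E d c"
    using assms(1) unfolding reducible_def by blast
  show thesis
  proof (cases p)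
    case (Cons b p')
    then have "reducible w"
      using w q unfolding reducible_def by auto
    with assms(2) show thesis
      by blast
  next
    case Nil
    then have w': "c = a" "w = q @ [a] @ s"
      using w by auto
    show thesis
    proof (cases "a \<in> set q")
      case True
      then obtain q1 q2 where "q = q1 @ a # q2"
        by (meson split_list)
      then have "reducible w"
        unfolding reducible_def using w' q by (intro exI[of _ q1] exI[of _ a] exI[of _ q2] exI[of _ s]) auto
      with assms(2) show thesis
        by blast
    next
      case False
      then have "\<forall>d\<in>set q. E d a"
        using q w'(1) by auto
      then show thesis
        using that[of q s] w'(2) by simp
    qed
  qed
qed

lemma reducible_insert:
  assumes "\<forall>b\<in>set p. E b a" and "reducible (p @ w)"
  shows "reducible (p @ a # w)"
  using assms
proof (induction p)
  case Nil
  then show ?case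
    using reducible_append[of w "[a]"] by simp
next
  case (Cons b p)
  show ?case
  proof (cases "reducible (p @ w)")
    case True
    then show ?thesis
      using Cons reducible_append[of "p @ a # w" "[b]"] by simp
  next
    case False
    have "reducible (b # (p @ w))"
      using Cons.prems(2) by simp
    then obtain q s where qs: "p @ w = q @ b # s" "\<forall>d\<in>set q. E d b"
      using reducible_ConsE False by blast
    have ab: "E a b"
      using Cons.prems(1) sym by simp
    obtain q' s' where q': "p @ a # w = q' @ b # s'" "set q' \<subseteq> insert a (set q)"
      using qs(1) by (rule append_eq_append_Cons_insertE)
    moreover have "\<forall>d\<in>set q'. E d b"
      using q'(2) qs(2) ab by auto
    ultimately show ?thesis
      unfolding reducible_def
      by (intro exI[of _ "[]"] exI[of _ b] exI[of _ q'] exI[of _ s']) auto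
  qed
qed

lemma movable_expand: "positive_blocks bl \<Longrightarrow> movable a (expand bl) \<longleftrightarrow> movable a (map fst bl)"
proof (induction bl)
  case (Cons p bl)
  obtain b k where p: "p = (b, k)" and k: "0 < k" and bl: "positive_blocks bl"
    using Cons.prems by (cases p) auto
  show ?case
  proof (cases "b = a")
    case False
    then have "movable a (replicate k b @ expand bl) \<longleftrightarrow> E b a \<and> movable a (expand bl)"
      using k by (simp add: movable_append)
    then show ?thesis
      using p False Cons.IH[OF bl] by (simp add: movable_Cons)
  qed (use p k in \<open>auto simp: gr0_conv_Suc\<close>)
qed (simp add: movable_def)

lemma trace_eq_replicate_cancel:
  assumes "replicate m a @ u \<sim> replicate k a @ u'" "\<not> movable a u" "\<not> movable a u'"
  shows "m = k"
proof -
  have no_extra: "\<not> (replicate m a @ u \<sim> replicate (m + Suc d) a @ u')" if "\<not> movable a u" for m d u u'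
  proof
    assume eq: "replicate m a @ u \<sim> replicate (m + Suc d) a @ u'"
    have "replicate (m + Suc d) a @ u' = replicate m a @ (a # replicate d a @ u')"
      by (induction m) auto
    then have "u \<sim> a # replicate d a @ u'"
      using eq by (simp only:) (rule trace_eq_cancel_prefix)
    with that show False
      using movable_iff by blast
  qed
  show ?thesis
  proof (rule ccontr)
    assume "m \<noteq> k"
    then consider "m < k" | "k < m"
      by linarith
    then show False
    proof cases
      case 1
      then obtain d where "k = m + Suc d"
        using less_iff_Suc_add by auto
      then show False
        using no_extra[OF assms(2)] assms(1) by blast
    next
      case 2
      then obtain d where "m = k + Suc d"
        using less_iff_Suc_add by auto
      then show False
        using no_extra[OF assms(3)] trace_eq_sym[OF assms(1)] by blast
    qed
  qed
qed

lemma movable_blockE: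
  assumes "positive_blocks bl" "movable a (expand bl)"
  obtains bl1 k bl2 where "bl = bl1 @ (a, k) # bl2" "a \<notin> fst ` set bl1" "\<forall>b\<in>fst ` set bl1. E b a"
    "expand bl \<sim> replicate k a @ expand (bl1 @ bl2)"
proof -
  have mv: "movable a (map fst bl)"
    using assms movable_expand by blast
  then obtain p q where pq: "map fst bl = p @ a # q" "a \<notin> set p"
    unfolding movable_def by (meson split_list_first)
  then have adj: "\<forall>b\<in>set p. E b a"
    using mv by (simp add: movable_append)
  obtain bl1 k bl2 where bl: "bl = bl1 @ (a, k) # bl2" "map fst bl1 = p" "map fst bl2 = q"
    using map_fst_eq_append_Cons[OF pq(1)] by blast
  have "\<forall>b\<in>set (expand bl1). E b a"
    using adj bl(2) set_expand_subset by fastforce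
  then have "expand bl1 @ replicate k a \<sim> replicate k a @ expand bl1"
    by (rule trace_eq_commute_replicate)
  then have "(expand bl1 @ replicate k a) @ expand bl2 \<sim> (replicate k a @ expand bl1) @ expand bl2"
    by (rule trace_eq_append_right)
  then have "expand bl \<sim> replicate k a @ expand (bl1 @ bl2)"
    using bl(1) by simp
  then show thesis
    using that bl adj pq(2) by auto
qed

lemma trace_eq_expand_ConsE:
  assumes bl: "positive_blocks ((a, m) # t)" and bl': "positive_blocks bl'"
    and reduced: "\<not> reducible (map fst ((a, m) # t))" and reduced': "\<not> reducible (map fst bl')"
    and eq: "expand ((a, m) # t) \<sim> expand bl'"
  obtains bl1 bl2 where "bl' = bl1 @ (a, m) # bl2" "\<forall>b\<in>fst ` set bl1. E b a"
    "expand t \<sim> expand (bl1 @ bl2)"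
proof -
  obtain m' where "m = Suc m'"
    using bl gr0_conv_Suc by auto
  then have "movable a (expand ((a, m) # t))"
    by simp
  then have "movable a (expand bl')"
    using trace_eq_movable[OF eq] by blast
  then obtain bl1 k bl2 where split: "bl' = bl1 @ (a, k) # bl2" "a \<notin> fst ` set bl1"
    "\<forall>b\<in>fst ` set bl1. E b a" and move: "expand bl' \<sim> replicate k a @ expand (bl1 @ bl2)"
    using movable_blockE bl' by blast
  have not_t: "\<not> movable a (expand t)"
    using bl reduced movable_expand reducible_Cons_of_movable by auto
  have not_rest: "\<not> movable a (expand (bl1 @ bl2))"
  proof
    assume "movable a (expand (bl1 @ bl2))"
    then have "movable a (map fst bl2)"
      using bl' split movable_expand[of "bl1 @ bl2"] by (simp add: movable_append)
    then have "reducible (map fst bl1 @ a # map fst bl2)"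
      using reducible_append reducible_Cons_of_movable by blast
    then show False
      using reduced' split(1) by simp
  qed
  have eq': "replicate m a @ expand t \<sim> replicate k a @ expand (bl1 @ bl2)"
    using eq move trace_eq_trans by auto
  have "m = k"
    by (rule trace_eq_replicate_cancel[OF eq' not_t not_rest])
  with eq' have "replicate k a @ expand t \<sim> replicate k a @ expand (bl1 @ bl2)"
    by simp
  then have "expand t \<sim> expand (bl1 @ bl2)"
    by (rule trace_eq_cancel_prefix)
  then show thesis
    using that[of bl1 bl2] split \<open>m = k\<close> by simp
qed

lemma trace_eq_expand_injective:
  "positive_blocks bl \<Longrightarrow> positive_blocks bl' \<Longrightarrow> \<not> reducible (map fst bl) \<Longrightarrow> \<not> reducible (map fst bl')
   \<Longrightarrow> expand bl \<sim> expand bl'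
   \<Longrightarrow> map fst bl \<sim> map fst bl' \<and> (\<forall>b. block_exponents b bl = block_exponents b bl')"
proof (induction bl arbitrary: bl')
  case Nil
  then have "bl' = []"
    using trace_eq_length[OF Nil.prems(5)] expand_eq_Nil_iff[OF Nil.prems(2)] by simp
  then show ?case
    by simp
next
  case (Cons p t)
  obtain a m where p: "p = (a, m)"
    by (cases p)
  obtain bl1 bl2 where bl': "bl' = bl1 @ (a, m) # bl2" "\<forall>b\<in>fst ` set bl1. E b a"
    and rest: "expand t \<sim> expand (bl1 @ bl2)"
    using trace_eq_expand_ConsE Cons.prems[unfolded p] by blast
  have "\<not> reducible (map fst t)"
    using Cons.prems(3) p reducible_append[of _ "[a]"] by auto
  moreover have "\<not> reducible (map fst (bl1 @ bl2))"
    using Cons.prems(4) bl' reducible_insert[of "map fst bl1" a "map fst bl2"] by auto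
  ultimately have IH: "map fst t \<sim> map fst (bl1 @ bl2)"
    "\<forall>b. block_exponents b t = block_exponents b (bl1 @ bl2)"
    using Cons.IH[OF _ _ _ _ rest] Cons.prems(1,2) p bl'(1) by auto
  have "a # map fst bl1 \<sim> map fst bl1 @ [a]"
    using trace_eq_commute[of "map fst bl1" a] bl'(2) trace_eq_sym by simp
  then have "(a # map fst bl1) @ map fst bl2 \<sim> (map fst bl1 @ [a]) @ map fst bl2"
    by (rule trace_eq_append_right)
  then have "map fst (p # t) \<sim> map fst bl'"
    using trace_eq_trans[OF trace_eq_Cons[OF IH(1)]] p bl'(1) by simp
  moreover have "a \<notin> fst ` set bl1"
    using bl'(2) irrefl by blast
  then have "block_exponents b (p # t) = block_exponents b bl'" for b
    using IH(2) p bl'(1) block_exponents_eq_Nil[of a bl1] by (cases "b = a") auto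
  ultimately show ?case
    by blast
qed

lemma trace_eq_expand_surjective: "\<exists>bl. positive_blocks bl \<and> \<not> reducible (map fst bl) \<and> w \<sim> expand bl"
proof (induction w)
  case Nil
  show ?case
    by (rule exI[of _ "[]"]) (simp add: not_reducible_Nil)
next
  case (Cons a w)
  then obtain bl where bl: "positive_blocks bl" "\<not> reducible (map fst bl)" "w \<sim> expand bl"
    by blast
  show ?case
  proof (cases "reducible (a # map fst bl)")
    case False
    then show ?thesis
      using bl trace_eq_Cons[OF bl(3), of a] by (intro exI[of _ "(a, 1) # bl"]) simp
  next
    case True
    then obtain q s where qs: "map fst bl = q @ a # s" "\<forall>d\<in>set q. E d a"
      using reducible_ConsE bl(2) by blast
    obtain bl1 k bl2 where dec: "bl = bl1 @ (a, k) # bl2" "map fst bl1 = q" "map fst bl2 = s"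
      using map_fst_eq_append_Cons[OF qs(1)] by blast
    define bl' where "bl' = bl1 @ (a, Suc k) # bl2"
    have "\<forall>b\<in>set (expand bl1). E b a"
      using qs(2) dec(2) set_expand_subset by fastforce
    then have "a # expand bl1 \<sim> expand bl1 @ [a]"
      using trace_eq_commute trace_eq_sym by blast
    then have "(a # expand bl1) @ replicate k a @ expand bl2 \<sim> (expand bl1 @ [a]) @ replicate k a @ expand bl2"
      by (rule trace_eq_append_right)
    then have "a # expand bl \<sim> expand bl'"
      unfolding bl'_def dec(1) by simp
    then have "a # w \<sim> expand bl'"
      using trace_eq_Cons[OF bl(3)] trace_eq_trans by blast
    moreover have "positive_blocks bl'" "map fst bl' = map fst bl"
      using bl(1) dec unfolding bl'_def by simp_all
    ultimately show ?thesis
      using bl(2) by auto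
  qed
qed

lemma trace_eq_letters_expand:
  assumes "map fst bl \<sim> r"
  obtains bl' where "map fst bl' = r" "mset bl' = mset bl" "expand bl \<sim> expand bl'"
proof -
  have "(swap_step E)\<^sup>*\<^sup>* (map fst bl) r"
    using assms trace_eq_iff_rtranclp by blast
  then have "\<exists>bl'. map fst bl' = r \<and> mset bl' = mset bl \<and> expand bl \<sim> expand bl'"
  proof (induction rule: rtranclp_induct)
    case (step u v)
    then obtain bl1 where bl1: "map fst bl1 = u" "mset bl1 = mset bl" "expand bl \<sim> expand bl1"
      by blast
    obtain u1 a b v1 where uv: "u = u1 @ [a, b] @ v1" "v = u1 @ [b, a] @ v1" "E a b"
      using step(2) unfolding swap_step_def by blast
    obtain U k l V where split: "bl1 = U @ (a, k) # (b, l) # V" "map fst U = u1" "map fst V = v1"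
      using bl1(1) uv(1) by (auto simp: map_eq_append_conv map_eq_Cons_conv)
    define bl2 where "bl2 = U @ (b, l) # (a, k) # V"
    have "replicate k a @ replicate l b \<sim> replicate l b @ replicate k a"
      using uv(3) by (intro trace_eq_commute_replicate) simp
    then have "expand U @ (replicate k a @ replicate l b) @ expand V
        \<sim> expand U @ (replicate l b @ replicate k a) @ expand V"
      by (rule trace_eq_append[OF trace_eq_refl trace_eq_append_right])
    then have "expand bl1 \<sim> expand bl2"
      unfolding split(1) bl2_def by simp
    moreover have "map fst bl2 = v" "mset bl2 = mset bl"
      using split uv bl1(2) unfolding bl2_def by (auto simp: add_mset_commute)
    ultimately show ?case
      using bl1(3) trace_eq_trans by blast
  qed (auto intro: exI[of _ bl])
  then show thesis
    using that by blast
qed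

section \<open>The series f and f~\<close>

lemma monomial_trace_rep: "monomial X (trace_rep (trace w)) = monomial X w"
  unfolding monomial_def by (rule trace_eq_prod_list[OF trace_eq_trace_rep, symmetric])

lemma ftilde_series_traces: "ftilde_series V E X = (\<Sum>\<^sub>\<infinity>C\<in>traces V. monomial X (trace_rep C))"
  by (simp add: ftilde_series_def traces_def trace_rep_def)

definition reduced_traces :: "'v set \<Rightarrow> 'v list set set" where
  "reduced_traces V = {w \<in> words V. reduced_word E w} // word_equiv E"

definition reduced_rep :: "'v list set \<Rightarrow> 'v list" where
  "reduced_rep R = (SOME w. w \<in> R \<and> reduced_word E w)"

lemma f_series_reduced_traces: "f_series V E X = (\<Sum>\<^sub>\<infinity>R\<in>reduced_traces V. monomial X (reduced_rep R))"
  by (simp add: f_series_def reduced_traces_def reduced_rep_def)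

lemma reduced_traces_iff: "R \<in> reduced_traces V \<longleftrightarrow> (\<exists>w. set w \<subseteq> V \<and> \<not> reducible w \<and> R = trace w)"
  unfolding reduced_traces_def quotient_def words_def trace_def reduced_word_iff by blast

lemma reduced_rep:
  assumes "R \<in> reduced_traces V"
  shows "\<not> reducible (reduced_rep R) \<and> trace (reduced_rep R) = R \<and> set (reduced_rep R) \<subseteq> V"
proof -
  obtain w where w: "set w \<subseteq> V" "\<not> reducible w" "R = trace w"
    using assms reduced_traces_iff by blast
  then have "w \<in> R \<and> reduced_word E w"
    by (simp add: reduced_word_iff)
  then have "reduced_rep R \<in> R \<and> reduced_word E (reduced_rep R)"
    unfolding reduced_rep_def by (rule someI)
  then have "w \<sim> reduced_rep R" "\<not> reducible (reduced_rep R)"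
    using w(3) by (simp_all add: reduced_word_iff)
  then show ?thesis
    using w trace_eq_iff[of "reduced_rep R" w] trace_eq_sym trace_eq_set by auto
qed

lemma inj_on_trace_expand:
  "inj_on (\<lambda>(R, bl). trace (expand bl)) (SIGMA R:reduced_traces V. blocks (reduced_rep R))"
proof (rule inj_onI, clarify)
  fix R bl R' bl'
  assume R: "R \<in> reduced_traces V" "R' \<in> reduced_traces V"
    and "bl \<in> blocks (reduced_rep R)" "bl' \<in> blocks (reduced_rep R')"
    and eq: "trace (expand bl) = trace (expand bl')"
  then have bl: "map fst bl = reduced_rep R" "positive_blocks bl"
    and bl': "map fst bl' = reduced_rep R'" "positive_blocks bl'"
    by (simp_all add: blocks_def)
  have "expand bl \<sim> expand bl'"
    using eq by (simp add: trace_eq_iff)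
  then have letters: "map fst bl \<sim> map fst bl'"
    and exps: "\<forall>b. block_exponents b bl = block_exponents b bl'"
    using trace_eq_expand_injective[OF bl(2) bl'(2)] bl(1) bl'(1) reduced_rep R by auto
  have "R = trace (map fst bl)" "R' = trace (map fst bl')"
    using bl(1) bl'(1) reduced_rep R by auto
  then have "R = R'"
    using letters by (simp add: trace_eq_iff)
  moreover from this have "bl = bl'"
    using bl(1) bl'(1) exps by (intro blocks_eqI) simp_all
  ultimately show "R = R' \<and> bl = bl'"
    by simp
qed

lemma trace_expand_image:
  "(\<lambda>(R, bl). trace (expand bl)) ` (SIGMA R:reduced_traces V. blocks (reduced_rep R)) = traces V"
proof (intro subset_antisym subsetI)
  fix C assume "C \<in> (\<lambda>(R, bl). trace (expand bl)) ` (SIGMA R:reduced_traces V. blocks (reduced_rep R))"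
  then obtain R bl where R: "R \<in> reduced_traces V" and bl: "map fst bl = reduced_rep R"
    and C: "C = trace (expand bl)"
    by (auto simp: blocks_def)
  have "set (map fst bl) \<subseteq> V"
    using reduced_rep[OF R] bl by simp
  then have "set (expand bl) \<subseteq> V"
    using set_expand_subset[of bl] by auto
  then show "C \<in> traces V"
    unfolding traces_iff C by blast
next
  fix C assume "C \<in> traces V"
  then obtain w where w: "set w \<subseteq> V" "C = trace w"
    using traces_iff by blast
  obtain bl where bl: "positive_blocks bl" "\<not> reducible (map fst bl)" "w \<sim> expand bl"
    using trace_eq_expand_surjective by blast
  have "set (map fst bl) \<subseteq> V"
    using set_expand[OF bl(1)] trace_eq_set[OF bl(3)] w(1) by auto
  then have R: "trace (map fst bl) \<in> reduced_traces V"
    using bl(2) reduced_traces_iff by blast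
  then have "map fst bl \<sim> reduced_rep (trace (map fst bl))"
    using reduced_rep[OF R] trace_eq_iff trace_eq_sym by blast
  then obtain bl' where bl': "map fst bl' = reduced_rep (trace (map fst bl))" "mset bl' = mset bl"
    "expand bl \<sim> expand bl'"
    by (rule trace_eq_letters_expand)
  have "set bl' = set bl"
    using arg_cong[OF bl'(2), of set_mset] by simp
  then have "bl' \<in> blocks (reduced_rep (trace (map fst bl)))"
    using bl(1) bl'(1) by (simp add: blocks_def positive_blocks_def)
  moreover have "C = trace (expand bl')"
    using w(2) trace_eq_trans[OF bl(3) bl'(3)] trace_eq_iff by blast
  ultimately show "C \<in> (\<lambda>(R, bl). trace (expand bl)) ` (SIGMA R:reduced_traces V. blocks (reduced_rep R))"
    using R by (intro rev_image_eqI[of "(trace (map fst bl), bl')"]) simp_all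
qed

lemma bij_betw_trace_expand:
  "bij_betw (\<lambda>(R, bl). trace (expand bl)) (SIGMA R:reduced_traces V. blocks (reduced_rep R)) (traces V)"
  by (simp add: bij_betw_def inj_on_trace_expand trace_expand_image)

lemma ftilde_series_eq_f_series:
  assumes x: "\<forall>v\<in>V. 0 \<le> x v \<and> x v < 1"
  shows "ftilde_series V E (\<lambda>v. ennreal (x v)) = f_series V E (\<lambda>v. ennreal (x v / (1 - x v)))"
proof -
  let ?X = "\<lambda>v. ennreal (x v)"
  let ?S = "SIGMA R:reduced_traces V. blocks (reduced_rep R)"
  have "ftilde_series V E ?X = (\<Sum>\<^sub>\<infinity>(R, bl)\<in>?S. monomial ?X (expand bl))"
    unfolding ftilde_series_traces infsum_reindex_bij_betw[OF bij_betw_trace_expand, symmetric]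
    by (simp add: monomial_trace_rep case_prod_unfold)
  also have "\<dots> = (\<Sum>\<^sub>\<infinity>R\<in>reduced_traces V. \<Sum>\<^sub>\<infinity>bl\<in>blocks (reduced_rep R). prod_list (map (\<lambda>(a, k). ?X a ^ k) bl))"
    by (simp add: infsum_Sigma_ennreal monomial_def prod_list_expand)
  also have "\<dots> = (\<Sum>\<^sub>\<infinity>R\<in>reduced_traces V. prod_list (map (\<lambda>a. \<Sum>\<^sub>\<infinity>k\<in>{0<..}. ?X a ^ k) (reduced_rep R)))"
    by (simp only: infsum_blocks_ennreal)
  also have "\<dots> = (\<Sum>\<^sub>\<infinity>R\<in>reduced_traces V. monomial (\<lambda>v. ennreal (x v / (1 - x v))) (reduced_rep R))"
  proof (rule infsum_cong)
    fix R assume "R \<in> reduced_traces V"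
    then have "\<forall>a\<in>set (reduced_rep R). (\<Sum>\<^sub>\<infinity>k\<in>{0<..}. ?X a ^ k) = ennreal (x a / (1 - x a))"
      using reduced_rep[OF \<open>R \<in> reduced_traces V\<close>] x by (auto intro!: infsum_geometric_ennreal)
    then show "prod_list (map (\<lambda>a. \<Sum>\<^sub>\<infinity>k\<in>{0<..}. ?X a ^ k) (reduced_rep R))
        = monomial (\<lambda>v. ennreal (x v / (1 - x v))) (reduced_rep R)"
      by (simp add: monomial_def cong: map_cong)
  qed
  also have "\<dots> = f_series V E (\<lambda>v. ennreal (x v / (1 - x v)))"
    by (simp add: f_series_reduced_traces)
  finally show ?thesis .
qed

lemma ftilde_series_eq_infsum_trace_sum:
  assumes "finite V" "\<forall>v\<in>V. 0 \<le> x v"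
  shows "ftilde_series V E (\<lambda>v. ennreal (x v)) = (\<Sum>\<^sub>\<infinity>n. ennreal (trace_sum V x n))"
proof -
  have bij: "bij_betw snd (SIGMA n:UNIV. traces_of_length V n) (traces V)"
    by (auto simp: bij_betw_def inj_on_def traces_of_length_def image_iff)
  have "ftilde_series V E (\<lambda>v. ennreal (x v)) = (\<Sum>\<^sub>\<infinity>C\<in>traces V. ennreal (trace_weight x C))"
    unfolding ftilde_series_traces trace_weight_def
    using assms(2) trace_trace_rep by (intro infsum_cong monomial_ennreal) blast
  also have "\<dots> = (\<Sum>\<^sub>\<infinity>(n, C)\<in>(SIGMA n:UNIV. traces_of_length V n). ennreal (trace_weight x C))"
    unfolding infsum_reindex_bij_betw[OF bij, symmetric] by (simp add: case_prod_unfold)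
  also have "\<dots> = (\<Sum>\<^sub>\<infinity>n. ennreal (trace_sum V x n))"
  proof -
    have "(\<Sum>\<^sub>\<infinity>C\<in>traces_of_length V n. ennreal (trace_weight x C)) = ennreal (trace_sum V x n)" for n
    proof -
      have "0 \<le> trace_weight x C" if "C \<in> traces_of_length V n" for C
        using that assms(2) by (auto simp: traces_of_length_def intro: trace_weight_nonneg)
      then show ?thesis
        using finite_traces_of_length[OF assms(1)] by (simp add: sum_ennreal trace_sum_def)
    qed
    then show ?thesis
      unfolding infsum_Sigma_ennreal by simp
  qed
  finally show ?thesis .
qed

section \<open>Positivity of the clique polynomial\<close>

lemma pos_clique_poly_of_summable:
  assumes V: "finite V" and y: "\<forall>v\<in>V. 0 \<le> y v \<and> y v \<le> x v" and x: "summable (trace_sum V x)"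
  shows "0 < clique_poly V E y"
proof -
  have y0: "\<forall>v\<in>V. 0 \<le> y v"
    using y by blast
  have "summable (trace_sum V y)"
    by (rule summable_comparison_test'[OF x, where N = 0]) (simp add: trace_sum_nonneg trace_sum_mono y y0)
  then have "clique_poly V E y * suminf (trace_sum V y) = 1" "0 \<le> suminf (trace_sum V y)"
    using clique_poly_mult_suminf[OF V] suminf_nonneg trace_sum_nonneg[OF y0] by auto
  then show ?thesis
    by (metis less_eq_real_def mult_nonpos_nonneg not_less zero_less_one)
qed

text \<open>\<open>1 / K\<^sub>U(z)\<close> is the sum of the trace series of \<open>U\<close>, which grows with \<open>U\<close>.\<close>

lemma clique_poly_le_subset:
  assumes V: "finite V" and z: "\<forall>v\<in>V. 0 \<le> z v" and pos: "\<forall>U\<subseteq>V. 0 < clique_poly U E z"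
    and U: "U \<subseteq> V"
  shows "clique_poly V E z \<le> clique_poly U E z"
proof -
  have fU: "finite U" and zU: "\<forall>v\<in>U. 0 \<le> z v"
    using V U z finite_subset by auto
  have sV: "summable (trace_sum V z)" and sU: "summable (trace_sum U z)"
    using summable_trace_sum[OF V z] summable_trace_sum[OF fU zU] pos U by auto
  have KV: "clique_poly V E z * suminf (trace_sum V z) = 1"
    and KU: "clique_poly U E z * suminf (trace_sum U z) = 1"
    by (rule clique_poly_mult_suminf[OF V sV], rule clique_poly_mult_suminf[OF fU sU])
  have le: "suminf (trace_sum U z) \<le> suminf (trace_sum V z)"
    using V U z sU sV by (intro suminf_le) (auto intro: trace_sum_subset)
  have "0 < clique_poly U E z" "0 < clique_poly V E z"
    using pos U by auto
  moreover from this(1) have "suminf (trace_sum U z) = 1 / clique_poly U E z"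
    using KU by (simp add: field_simps)
  ultimately have "0 < suminf (trace_sum U z)"
    by simp
  moreover have "clique_poly V E z * suminf (trace_sum U z) \<le> clique_poly U E z * suminf (trace_sum U z)"
    using KU KV le \<open>0 < clique_poly V E z\<close> by (metis mult_left_mono less_eq_real_def)
  ultimately show ?thesis
    by (simp add: mult_le_cancel_right)
qed

text \<open>At the smallest scaling \<open>\<alpha>\<close> at which some \<open>K\<^sub>U(\<alpha> x)\<close> stops being positive, all of them
  are positive just below \<open>\<alpha>\<close>, so \<open>K\<^sub>V \<le> K\<^sub>U\<close> there; by continuity \<open>K\<^sub>V(\<alpha> x) \<le> 0\<close>.\<close>

lemma pos_clique_poly_subsets_of_scaled:
  assumes V: "finite V" and x: "\<forall>v\<in>V. 0 \<le> x v"
    and pos: "\<forall>\<alpha>::real. 0 \<le> \<alpha> \<and> \<alpha> \<le> 1 \<longrightarrow> 0 < clique_poly V E (\<lambda>v. \<alpha> * x v)"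
  shows "\<forall>U\<subseteq>V. 0 < clique_poly U E x"
proof (rule ccontr)
  define phi where "phi U \<alpha> = clique_poly U E (\<lambda>v. \<alpha> * x v)" for U \<alpha>
  define S where "S = {\<alpha>::real. 0 \<le> \<alpha> \<and> \<alpha> \<le> 1 \<and> (\<exists>U\<in>Pow V. phi U \<alpha> \<le> 0)}"
  assume "\<not> (\<forall>U\<subseteq>V. 0 < clique_poly U E x)"
  then have "1 \<in> S"
    unfolding S_def phi_def by (auto simp: not_less)
  have cont: "continuous_on UNIV (phi U)" for U
    unfolding phi_def clique_poly_def by (intro continuous_intros)
  have "S = {0..1} \<inter> (\<Union>U\<in>Pow V. {\<alpha>. phi U \<alpha> \<le> 0})"
    unfolding S_def by auto
  then have "closed S"
    using V closed_Collect_le[OF cont continuous_on_const] by (auto intro!: closed_Int closed_UN)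
  moreover have bdd: "bdd_below S"
    unfolding S_def bdd_below_def by auto
  ultimately have "Inf S \<in> S"
    using \<open>1 \<in> S\<close> closed_contains_Inf by blast
  then obtain U0 where U0: "U0 \<subseteq> V" "phi U0 (Inf S) \<le> 0" and a: "0 \<le> Inf S" "Inf S \<le> 1"
    unfolding S_def by auto
  have "finite U0"
    using V U0(1) finite_subset by blast
  then have "phi U0 0 = 1"
    by (simp add: phi_def clique_poly_zero)
  then have a0: "0 < Inf S"
    using U0(2) a(1) by (cases "Inf S = 0") auto
  have below: "phi V \<alpha> \<le> phi U0 \<alpha>" if "0 < \<alpha>" "\<alpha> < Inf S" for \<alpha>
  proof -
    have "\<alpha> \<notin> S"
      using that cInf_lower[OF _ bdd, of \<alpha>] by force
    then have "\<forall>U\<subseteq>V. 0 < clique_poly U E (\<lambda>v. \<alpha> * x v)"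
      using that a unfolding S_def phi_def by (auto simp: not_le)
    then show ?thesis
      unfolding phi_def using x that by (intro clique_poly_le_subset[OF V _ _ U0(1)]) auto
  qed
  have "phi V (Inf S) \<le> phi U0 (Inf S)"
    using cont[of V] cont[of U0] a0 below by (rule continuous_le_at_left)
  moreover have "0 < phi V (Inf S)"
    using pos a unfolding phi_def by auto
  ultimately show False
    using U0(2) by simp
qed

end

theorem lemma4p1:
  fixes V :: "'v set" and E :: "'v \<Rightarrow> 'v \<Rightarrow> bool" and x :: "'v \<Rightarrow> real"
  assumes "simple_graph V E"
    and "\<forall>v\<in>V. 0 \<le> x v \<and> x v \<le> 1"
  defines "c1 \<equiv> (\<forall>v\<in>V. x v < 1) \<and>
              f_series V E (\<lambda>v. ennreal (x v / (1 - x v))) < top"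
    and "c2 \<equiv> ftilde_series V E (\<lambda>v. ennreal (x v)) < top"
    and "c3 \<equiv> (\<forall>y. (\<forall>v\<in>V. y v = 0 \<or> y v = x v) \<longrightarrow> clique_poly V E y > 0)"
    and "c4 \<equiv> (\<forall>y. (\<forall>v\<in>V. 0 \<le> y v \<and> y v \<le> x v) \<longrightarrow> clique_poly V E y > 0)"
    and "c5 \<equiv> (\<forall>\<alpha>::real. 0 \<le> \<alpha> \<and> \<alpha> \<le> 1 \<longrightarrow> clique_poly V E (\<lambda>v. \<alpha> * x v) > 0)"
  shows "(c1 \<longleftrightarrow> c2) \<and> (c2 \<longleftrightarrow> c3) \<and> (c3 \<longleftrightarrow> c4) \<and> (c4 \<longleftrightarrow> c5)"
proof -
  have V: "finite V"
    using assms(1) by (simp add: simple_graph_def)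
  interpret independence E
    using assms(1) by unfold_locales (auto simp: simple_graph_def)
  have x0: "\<forall>v\<in>V. 0 \<le> x v"
    using assms(2) by blast
  have c2: "c2 \<longleftrightarrow> summable (trace_sum V x)"
    unfolding c2_def ftilde_series_eq_infsum_trace_sum[OF V x0] infinity_ennreal_def[symmetric]
    by (rule infsum_ennreal_less_top_iff_summable[OF trace_sum_nonneg[OF x0]])
  have c3: "c3 \<longleftrightarrow> (\<forall>U\<subseteq>V. 0 < clique_poly U E x)"
    unfolding c3_def by (rule pos_clique_poly_subsets_iff[OF V])
  have "c2 \<Longrightarrow> c4" "c3 \<Longrightarrow> c2" "c5 \<Longrightarrow> c3"
    using c2 c3 pos_clique_poly_of_summable[OF V] summable_trace_sum[OF V x0]
      pos_clique_poly_subsets_of_scaled[OF V x0] by (auto simp: c4_def c5_def)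
  moreover have "c4 \<Longrightarrow> c3"
    unfolding c3_def c4_def
  proof (intro allI impI)
    fix y assume "\<forall>v\<in>V. y v = 0 \<or> y v = x v"
    then have "\<forall>v\<in>V. 0 \<le> y v \<and> y v \<le> x v"
      using x0 by auto
    moreover assume "\<forall>y. (\<forall>v\<in>V. 0 \<le> y v \<and> y v \<le> x v) \<longrightarrow> 0 < clique_poly V E y"
    ultimately show "0 < clique_poly V E y"
      by blast
  qed
  moreover have "c4 \<Longrightarrow> c5"
    using x0 unfolding c4_def c5_def by (simp add: mult_left_le_one_le)
  moreover have "c4 \<Longrightarrow> \<forall>v\<in>V. x v < 1"
    using less_one_of_pos_clique_poly_box[OF V _ x0] unfolding c4_def by blast
  moreover have "c1 \<longleftrightarrow> (\<forall>v\<in>V. x v < 1) \<and> c2"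
    using ftilde_series_eq_f_series[of V x] x0 unfolding c1_def c2_def by auto
  ultimately show ?thesis
    by blast
qed

end
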